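(* Let $n\geq1$ and let $x_1>x_2>\cdots>x_n$ be nonzero integers. For a virtual knot diagram $K$ let $C_{(x_1,\dots,x_n)}$ be the set of $n$-tuples $(c_1,\dots,c_n)$ of chords of $G(K)$ with $\mathrm{Ind}(c_i)=x_i$ for all $i$, and set $$a_{(x_1,\dots,x_n)}(K)=\sum_{(c_1,\dots,c_n)\in C_{(x_1,\dots,x_n)}}\prod_{i=1}^n w(c_i).$$ Then $a_{(x_1,\dots,x_n)}$ is a virtual knot invariant and it is a finite type invariant of degree exactly $n$.
   Context: Virtual knot diagrams, real crossings with writhes $w(c)\in\{\pm1\}$, generalized Reidemeister moves ($\Omega_1,\Omega_2,\Omega_3$, virtual moves, mixed move $\Omega_3^v$). Gauss diagram $G(K)$: counterclockwise circle with, for each real crossing $c$, a chord directed from the overcrossing preimage to the undercrossing preimage, signed $w(c)$. A chord $d$ crosses $c$ if their endpoints interlace; viewing $c$ as an arrow in the disk, $d$ crosses $c$ from left to right if its tail is left of $c$ and head right of $c$, else from right to left. With $r_\pm(c), l_\pm(c)$ the numbers of chords of sign $\pm$ crossing $c$ from left to right, resp. right to left, $\mathrm{Ind}(c)=r_+(c)-r_-(c)-l_+(c)+l_-(c)$. Finite type invariants: a singular virtual knot diagram is a virtual knot diagram some of whose crossings are singular (transverse double points), considered up to generalized and singular Reidemeister moves. An invariant $f$ of virtual knots with values in an abelian group is extended to singular virtual knots by $f^{(0)}=f$ and $f^{(m)}(K)=f^{(m-1)}(K_+)-f^{(m-1)}(K_-)$, where $K_\pm$ resolves one singular crossing into a positive/negative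 crossing; equivalently for $K$ with singular crossings $c_1,\dots,c_m$, $f^{(m)}(K)=\sum_{\sigma\in\{0,1\}^m}(-1)^{|\sigma|}f(K_\sigma)$ where $K_\sigma$ resolves $c_i$ positively if $\sigma_i=0$ and negatively if $\sigma_i=1$. $f$ is a finite type invariant of degree $n$ if $f^{(n+1)}$ vanishes on all singular virtual knots with $n+1$ singular crossings, but $f^{(n)}(K)\neq0$ for some singular virtual knot $K$ with $n$ singular crossings. *)

theory Defs
  imports Main
begin

text \<open>Virtual knots are modelled by Gauss diagrams (Goussarov--Polyak--Viro).
  A Gauss diagram is a word (read along the counterclockwise circle, up to rotation)
  whose letters are chord endpoints: (i, True) is the tail (overcrossing preimage)
  of chord i and (i, False) its head (undercrossing preimage); the second component
  gives the sign (writhe) of each chord.\<close>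

type_synonym gauss = "(nat \<times> bool) list \<times> (nat \<Rightarrow> int)"

definition labels :: "gauss \<Rightarrow> nat set" where
  "labels D = fst ` set (fst D)"

definition gauss_wf :: "gauss \<Rightarrow> bool" where
  "gauss_wf D \<longleftrightarrow> distinct (fst D) \<and>
     (\<forall>i \<in> labels D. (i, True) \<in> set (fst D) \<and> (i, False) \<in> set (fst D)
        \<and> (snd D i = 1 \<or> snd D i = -1))"

definition agree :: "(nat \<Rightarrow> int) \<Rightarrow> (nat \<Rightarrow> int) \<Rightarrow> (nat \<times> bool) list \<Rightarrow> bool" where
  "agree s s' w \<longleftrightarrow> (\<forall>i \<in> fst ` set w. s' i = s i)"

definition sgnb :: "bool \<Rightarrow> int" where
  "sgnb b = (if b then 1 else -1)"

text \<open>One generalized Reidemeister step on Gauss diagrams (in the "insertion" direction;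
  virtual moves and the mixed move do not change the Gauss diagram). Rotation of the word
  and renaming of chords do not change the Gauss diagram either.\<close>

definition rot_step :: "gauss \<Rightarrow> gauss \<Rightarrow> bool" where
  "rot_step D D' \<longleftrightarrow> fst D' = rotate1 (fst D) \<and> agree (snd D) (snd D') (fst D)"

definition relabel_step :: "gauss \<Rightarrow> gauss \<Rightarrow> bool" where
  "relabel_step D D' \<longleftrightarrow> (\<exists>\<pi>. inj_on \<pi> (labels D) \<and>
      fst D' = map (\<lambda>(i, b). (\<pi> i, b)) (fst D) \<and>
      (\<forall>i \<in> labels D. snd D' (\<pi> i) = snd D i))"

definition R1_step :: "gauss \<Rightarrow> gauss \<Rightarrow> bool" where
  "R1_step D D' \<longleftrightarrow> (\<exists>u v i b. fst D = u @ v \<and>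
      fst D' = u @ [(i, b), (i, \<not> b)] @ v \<and> agree (snd D) (snd D') (fst D))"

definition R2_step :: "gauss \<Rightarrow> gauss \<Rightarrow> bool" where
  "R2_step D D' \<longleftrightarrow> (\<exists>u v x i j k l. fst D = u @ v @ x \<and>
      ((k, l) = (i, j) \<or> (k, l) = (j, i)) \<and>
      fst D' = u @ [(i, True), (j, True)] @ v @ [(k, False), (l, False)] @ x \<and>
      snd D' i = - snd D' j \<and> agree (snd D) (snd D') (fst D))"

text \<open>Third move: strands T (top), M (middle), B (bottom); chord p = T over M,
  q = T over B, r = M over B. Each strand contributes a segment of two adjacent
  endpoints; the move reverses every segment. The admissibility condition on the
  orders (eT, eM, eB) and signs is the one realised by three lines in the plane.\<close>

definition segT :: "bool \<Rightarrow> nat \<Rightarrow> nat \<Rightarrow> (nat \<times> bool) list" where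
  "segT e p q = (if e then [(q, True), (p, True)] else [(p, True), (q, True)])"
definition segM :: "bool \<Rightarrow> nat \<Rightarrow> nat \<Rightarrow> (nat \<times> bool) list" where
  "segM e p r = (if e then [(p, False), (r, True)] else [(r, True), (p, False)])"
definition segB :: "bool \<Rightarrow> nat \<Rightarrow> nat \<Rightarrow> (nat \<times> bool) list" where
  "segB e q r = (if e then [(r, False), (q, False)] else [(q, False), (r, False)])"

definition R3_step :: "gauss \<Rightarrow> gauss \<Rightarrow> bool" where
  "R3_step D D' \<longleftrightarrow> (\<exists>u v x y A1 A2 A3 p q r eT eM eB.
      (let ST = segT eT p q; SM = segM eM p r; SB = segB eB q r in
        (A1, A2, A3) \<in> {(ST, SM, SB), (ST, SB, SM), (SM, ST, SB), (SM, SB, ST),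
                         (SB, ST, SM), (SB, SM, ST)}) \<and>
      fst D = u @ A1 @ v @ A2 @ x @ A3 @ y \<and>
      fst D' = u @ rev A1 @ v @ rev A2 @ x @ rev A3 @ y \<and>
      snd D p * sgnb eT * sgnb eM = - snd D q * sgnb eT * sgnb eB \<and>
      - snd D q * sgnb eT * sgnb eB = snd D r * sgnb eM * sgnb eB \<and>
      agree (snd D) (snd D') (fst D))"

definition gstep :: "gauss \<Rightarrow> gauss \<Rightarrow> bool" where
  "gstep D D' \<longleftrightarrow> rot_step D D' \<or> relabel_step D D' \<or> R1_step D D' \<or>
     R2_step D D' \<or> R3_step D D'"

definition knot_invariant :: "(gauss \<Rightarrow> 'a) \<Rightarrow> bool" where
  "knot_invariant f \<longleftrightarrow>
     (\<forall>D D'. gauss_wf D \<longrightarrow> gauss_wf D' \<longrightarrow> gstep D D' \<longrightarrow> f D = f D')"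

definition pos :: "(nat \<times> bool) list \<Rightarrow> nat \<times> bool \<Rightarrow> nat" where
  "pos w a = (THE k. k < length w \<and> w ! k = a)"

text \<open>Position k lies on the right of chord c (the arc traversed counterclockwise
  from the tail of c to its head).\<close>
definition right_of :: "(nat \<times> bool) list \<Rightarrow> nat \<Rightarrow> nat \<Rightarrow> bool" where
  "right_of w c k \<longleftrightarrow> (let t = pos w (c, True); h = pos w (c, False) in
      if t < h then t < k \<and> k < h else t < k \<or> k < h)"

definition Ind :: "gauss \<Rightarrow> nat \<Rightarrow> int" where
  "Ind D c = (\<Sum>d \<in> labels D - {c}.
      (let R = right_of (fst D) c; td = pos (fst D) (d, True); hd = pos (fst D) (d, False) in
        if \<not> R td \<and> R hd then snd D d
        else if R td \<and> \<not> R hd then - snd D d else 0))"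

definition chord_tuples :: "int list \<Rightarrow> gauss \<Rightarrow> nat list set" where
  "chord_tuples xs D = {cs. length cs = length xs \<and>
      (\<forall>i < length xs. cs ! i \<in> labels D \<and> Ind D (cs ! i) = xs ! i)}"

definition a_inv :: "int list \<Rightarrow> gauss \<Rightarrow> int" where
  "a_inv xs D = (\<Sum>cs \<in> chord_tuples xs D. \<Prod>i < length xs. snd D (cs ! i))"

text \<open>A singular diagram with singular crossings S is given by
  a Gauss diagram D and a set S of its chords; resolving crossing c with sign eps is
  a crossing change (reverse the chord, negate the sign) if needed.\<close>

definition resolve :: "gauss \<Rightarrow> nat set \<Rightarrow> nat set \<Rightarrow> gauss" where
  "resolve D S T = (let tgt = (\<lambda>i. if i \<in> T then -1 else (1::int)) in
     (map (\<lambda>(i, b). if i \<in> S \<and> snd D i \<noteq> tgt i then (i, \<not> b) else (i, b)) (fst D),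
      \<lambda>i. if i \<in> S then tgt i else snd D i))"

definition sing_deriv :: "(gauss \<Rightarrow> 'a::ab_group_add) \<Rightarrow> gauss \<Rightarrow> nat set \<Rightarrow> 'a" where
  "sing_deriv f D S = (\<Sum>T \<in> Pow S. (if even (card T) then f (resolve D S T)
                                      else - f (resolve D S T)))"

definition finite_type_degree :: "(gauss \<Rightarrow> 'a::ab_group_add) \<Rightarrow> nat \<Rightarrow> bool" where
  "finite_type_degree f n \<longleftrightarrow>
     (\<forall>D S. gauss_wf D \<longrightarrow> S \<subseteq> labels D \<longrightarrow> card S = n + 1 \<longrightarrow> sing_deriv f D S = 0) \<and>
     (\<exists>D S. gauss_wf D \<and> S \<subseteq> labels D \<and> card S = n \<and> sing_deriv f D S \<noteq> 0)"

end

(*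
  Rotation and relabelling preserve all
  crossing signs. The chord created by the first move has index 0, which is none of the x_i.
  The two chords created by the second move have equal index and opposite signs; as the x_i are
  distinct, exchanging them is a sign-reversing involution on the tuples meeting them. The third
  move changes no index: for chords outside the triangle the relative order of endpoints is
  unchanged, and within the triangle the sign condition of the move makes the contributions agree.

  Degree: a crossing change of c reverses the chord and negates w(c), so w(c) Ind(c) is invariant
  and resolving singular crossings only changes the weights w(c_i). The alternating sum over the
  resolutions of a singular set S then vanishes for every tuple missing a chord of S, which is
  unavoidable when |S| = n + 1. When S is the set of entries of a tuple, each surviving tuple is
  an ordering of S and contributes a product of non-negative factors; a diagram in which chords
  c_1, ..., c_n have w(c_i) Ind(c_i) = x_i, built from blocks of parallel chords, makes the
  contribution of (c_1, ..., c_n) positive.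
*)
theory Submission
  imports Defs "HOL-Library.Disjoint_Sets"
begin

section \<open>Positions in a word\<close>

lemma pos_nth: "distinct w \<Longrightarrow> k < length w \<Longrightarrow> pos w (w ! k) = k"
  unfolding pos_def by (rule the_equality) (auto simp: nth_eq_iff_index_eq)

lemma pos_less_length: "distinct w \<Longrightarrow> a \<in> set w \<Longrightarrow> pos w a < length w"
  by (metis in_set_conv_nth pos_nth)

lemma nth_pos: "distinct w \<Longrightarrow> a \<in> set w \<Longrightarrow> w ! pos w a = a"
  by (metis in_set_conv_nth pos_nth)

lemma pos_eq_pos_iff: "distinct w \<Longrightarrow> a \<in> set w \<Longrightarrow> b \<in> set w \<Longrightarrow> pos w a = pos w b \<longleftrightarrow> a = b"
  by (metis nth_pos)

lemma pos_Cons: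
  assumes "distinct (x # w)" "a \<in> set (x # w)"
  shows "pos (x # w) a = (if x = a then 0 else Suc (pos w a))"
  using assms pos_nth[OF assms(1), of 0] pos_nth[OF assms(1), of "Suc (pos w a)"]
  by (auto simp: pos_less_length nth_pos)

lemma pos_append_left: "distinct (u @ v) \<Longrightarrow> a \<in> set u \<Longrightarrow> pos (u @ v) a = pos u a"
  by (metis distinct_append nth_append_left pos_less_length nth_pos pos_nth length_append trans_less_add1)

lemma pos_append_right: "distinct (u @ v) \<Longrightarrow> a \<in> set v \<Longrightarrow> pos (u @ v) a = length u + pos v a"
  using pos_nth[of "u @ v" "length u + pos v a"] by (simp add: nth_append pos_less_length nth_pos)

lemma pos_map:
  "inj_on g (set w) \<Longrightarrow> distinct w \<Longrightarrow> a \<in> set w \<Longrightarrow> pos (map g w) (g a) = pos w a"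
  using pos_nth[of "map g w" "pos w a"] by (simp add: distinct_map pos_less_length nth_pos)

lemma pos_filter_less_iff:
  "distinct w \<Longrightarrow> a \<in> set w \<Longrightarrow> b \<in> set w \<Longrightarrow> P a \<Longrightarrow> P b \<Longrightarrow>
    pos (filter P w) a < pos (filter P w) b \<longleftrightarrow> pos w a < pos w b"
proof (induction w)
  case (Cons x w)
  then have "distinct (filter P (x # w))" by simp
  then show ?case using Cons by (cases "x = a \<or> x = b") (auto simp: pos_Cons)
qed simp

lemma pos_rotate1:
  assumes "distinct w" "a \<in> set w"
  shows "pos (rotate1 w) a = (if pos w a = 0 then length w - 1 else pos w a - 1)"
proof (cases w)
  case (Cons x w')
  then have "distinct (w' @ [x])" using assms(1) by auto
  then show ?thesis
    using Cons assms pos_nth[of "[x]" 0] by (auto simp: pos_append_left pos_append_right pos_Cons)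
qed (use assms in simp)

text \<open>\<^const>\<open>pos\<close> is a definite description; this recursive version lets the simplifier compute
  positions in concrete words.\<close>

fun pos_rec :: "'a list \<Rightarrow> 'a \<Rightarrow> nat" where
  "pos_rec [] a = 0"
| "pos_rec (x # w) a = (if x = a then 0 else Suc (pos_rec w a))"

lemma pos_eq_pos_rec: "distinct w \<Longrightarrow> a \<in> set w \<Longrightarrow> pos w a = pos_rec w a"
  by (induction w) (auto simp: pos_Cons)

section \<open>Crossing signs and the index\<close>

lemma finite_labels: "finite (labels D)"
  unfolding labels_def by simp

lemma gauss_wf_distinct: "gauss_wf D \<Longrightarrow> distinct (fst D)"
  unfolding gauss_wf_def by simp

lemma gauss_wf_endpoint: "gauss_wf D \<Longrightarrow> i \<in> labels D \<Longrightarrow> (i, b) \<in> set (fst D)"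
  unfolding gauss_wf_def by (cases b) auto

lemma gauss_wf_sign: "gauss_wf D \<Longrightarrow> i \<in> labels D \<Longrightarrow> snd D i = 1 \<or> snd D i = -1"
  unfolding gauss_wf_def by simp

lemma gauss_wf_sign_square: "gauss_wf D \<Longrightarrow> i \<in> labels D \<Longrightarrow> snd D i * snd D i = 1"
  using gauss_wf_sign by fastforce

definition cyclic_order :: "nat \<Rightarrow> nat \<Rightarrow> nat \<Rightarrow> bool" where
  "cyclic_order i j k \<longleftrightarrow> (i < j \<and> j < k) \<or> (j < k \<and> k < i) \<or> (k < i \<and> i < j)"

text \<open>The sign with which an arrow with endpoints at positions \<open>a \<rightarrow> b\<close> crosses the arrow
  \<open>t \<rightarrow> h\<close>: \<open>1\<close> from left to right, \<open>-1\<close> from right to left, \<open>0\<close> if they do not interlace.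
  The right of \<open>t \<rightarrow> h\<close> consists of the positions cyclically between \<open>t\<close> and \<open>h\<close>.\<close>

definition arrow_crossing :: "nat \<Rightarrow> nat \<Rightarrow> nat \<Rightarrow> nat \<Rightarrow> int" where
  "arrow_crossing t h a b =
    (if \<not> cyclic_order t a h \<and> cyclic_order t b h then 1
     else if cyclic_order t a h \<and> \<not> cyclic_order t b h then -1 else 0)"

definition chord_crossing :: "(nat \<times> bool) list \<Rightarrow> nat \<Rightarrow> nat \<Rightarrow> int" where
  "chord_crossing w c d =
    arrow_crossing (pos w (c, True)) (pos w (c, False)) (pos w (d, True)) (pos w (d, False))"

lemma right_of_eq_cyclic_order:
  "pos w (c, True) \<noteq> pos w (c, False) \<Longrightarrow> k \<noteq> pos w (c, True) \<Longrightarrow> k \<noteq> pos w (c, False) \<Longrightarrow>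
    right_of w c k = cyclic_order (pos w (c, True)) k (pos w (c, False))"
  unfolding right_of_def cyclic_order_def Let_def by auto

lemma Ind_eq_sum_chord_crossing:
  assumes wf: "gauss_wf D" and c: "c \<in> labels D"
  shows "Ind D c = (\<Sum>d \<in> labels D - {c}. chord_crossing (fst D) c d * snd D d)"
  unfolding Ind_def
proof (rule sum.cong[OF refl])
  fix d assume d: "d \<in> labels D - {c}"
  let ?w = "fst D"
  have "pos ?w (x, b) \<noteq> pos ?w (y, b')" if "x \<in> {c, d}" "y \<in> {c, d}" "(x, b) \<noteq> (y, b')" for x y b b'
    using that c d gauss_wf_endpoint[OF wf] by (auto simp: pos_eq_pos_iff gauss_wf_distinct[OF wf])
  then have "right_of ?w c (pos ?w (d, b)) = cyclic_order (pos ?w (c, True)) (pos ?w (d, b)) (pos ?w (c, False))"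
    for b using d by (intro right_of_eq_cyclic_order) auto
  then show "(let R = right_of ?w c; td = pos ?w (d, True); hd = pos ?w (d, False) in
      if \<not> R td \<and> R hd then snd D d else if R td \<and> \<not> R hd then - snd D d else 0) =
    chord_crossing ?w c d * snd D d"
    unfolding Let_def chord_crossing_def arrow_crossing_def by auto
qed

lemma cyclic_order_cong:
  "\<forall>x \<in> {i, j, k}. \<forall>y \<in> {i, j, k}. f x < f y \<longleftrightarrow> x < y \<Longrightarrow>
    cyclic_order (f i) (f j) (f k) = cyclic_order i j k"
  unfolding cyclic_order_def by auto

lemma arrow_crossing_cong:
  "\<forall>x \<in> {t, h, a, b}. \<forall>y \<in> {t, h, a, b}. f x < f y \<longleftrightarrow> x < y \<Longrightarrow>
    arrow_crossing (f t) (f h) (f a) (f b) = arrow_crossing t h a b"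
  unfolding arrow_crossing_def
  by (simp add: cyclic_order_cong[of t a h f] cyclic_order_cong[of t b h f])

lemma chord_crossing_cong_order:
  assumes "distinct w" and E: "E = {(c, True), (c, False), (d, True), (d, False)}" "E \<subseteq> set w"
    and order: "\<forall>e \<in> E. \<forall>e' \<in> E. pos w' e < pos w' e' \<longleftrightarrow> pos w e < pos w e'"
  shows "chord_crossing w' c d = chord_crossing w c d"
proof -
  define f where "f k = pos w' (w ! k)" for k
  have f: "f (pos w e) = pos w' e" if "e \<in> E" for e
    unfolding f_def using that E nth_pos[OF \<open>distinct w\<close>] by auto
  have "arrow_crossing (f (pos w (c, True))) (f (pos w (c, False))) (f (pos w (d, True))) (f (pos w (d, False)))
      = chord_crossing w c d"
    unfolding chord_crossing_def by (rule arrow_crossing_cong) (use order f E in auto)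
  then show ?thesis unfolding chord_crossing_def using f E by simp
qed

lemma chord_crossing_filter:
  assumes "distinct w" "\<And>b. (c, b) \<in> set w" "\<And>b. (d, b) \<in> set w" "\<And>b. P (c, b)" "\<And>b. P (d, b)"
  shows "chord_crossing (filter P w) c d = chord_crossing w c d"
  by (rule chord_crossing_cong_order[OF assms(1) refl]) (use assms pos_filter_less_iff in auto)

lemma chord_crossing_map:
  assumes "distinct w" "inj_on g (set w)" "\<And>b. g (c, b) = (c', b)" "\<And>b. g (d, b) = (d', b)"
    and "\<And>b. (c, b) \<in> set w" "\<And>b. (d, b) \<in> set w"
  shows "chord_crossing (map g w) c' d' = chord_crossing w c d"
  unfolding chord_crossing_def using assms pos_map[OF assms(2,1)] by metis

lemma chord_crossing_rotate1:
  assumes w: "distinct w" and "c \<noteq> d" "\<And>b. (c, b) \<in> set w" "\<And>b. (d, b) \<in> set w"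
  shows "chord_crossing (rotate1 w) c d = chord_crossing w c d"
proof -
  define f where "f i = (if i = 0 then length w - 1 else i - 1)" for i
  have f: "pos (rotate1 w) e = f (pos w e)" if "e \<in> set w" for e
    unfolding f_def using pos_rotate1[OF w that] .
  have "cyclic_order (f x) (f y) (f z) = cyclic_order x y z"
    if "distinct [x, y, z]" "x < length w" "y < length w" "z < length w" for x y z
    using that unfolding f_def cyclic_order_def by (cases "x = 0"; cases "y = 0"; cases "z = 0"; simp; linarith)
  moreover have "distinct [pos w (c, True), pos w (c, False), pos w (d, True), pos w (d, False)]"
    using assms by (auto simp: pos_eq_pos_iff)
  ultimately show ?thesis
    unfolding chord_crossing_def arrow_crossing_def using assms f by (simp add: pos_less_length)
qed

lemma arrow_crossing_eq_0_if: "cyclic_order t a h = cyclic_order t b h \<Longrightarrow> arrow_crossing t h a b = 0"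
  unfolding arrow_crossing_def by auto

lemma cyclic_order_swap: "distinct [i, j, k] \<Longrightarrow> cyclic_order k j i \<longleftrightarrow> \<not> cyclic_order i j k"
  unfolding cyclic_order_def by auto

lemma arrow_crossing_reverse: "distinct [t, h, a, b] \<Longrightarrow> arrow_crossing h t a b = - arrow_crossing t h a b"
  unfolding arrow_crossing_def using cyclic_order_swap[of t a h] cyclic_order_swap[of t b h] by auto

lemma arrow_crossing_reverse_crossing: "arrow_crossing t h b a = - arrow_crossing t h a b"
  unfolding arrow_crossing_def by auto

lemma cyclic_order_adjacent:
  assumes "x \<in> {P, Suc P}" "x' \<in> {P, Suc P}" "i \<notin> {P, Suc P}" "j \<notin> {P, Suc P}"
  shows "cyclic_order i x j = cyclic_order i x' j" "cyclic_order x i j = cyclic_order x' i j"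
    "cyclic_order i j x = cyclic_order i j x'"
proof -
  have less: "(x < y \<longleftrightarrow> P < y) \<and> (y < x \<longleftrightarrow> y < P)" if "x \<in> {P, Suc P}" "y \<notin> {P, Suc P}" for x y
    using that by auto
  show "cyclic_order i x j = cyclic_order i x' j" "cyclic_order x i j = cyclic_order x' i j"
    "cyclic_order i j x = cyclic_order i j x'"
    unfolding cyclic_order_def using less[OF assms(1)] less[OF assms(2)] assms(3,4) by simp_all
qed

lemma arrow_crossing_adjacent_ends:
  "t \<in> {P, Suc P} \<Longrightarrow> h \<in> {P, Suc P} \<Longrightarrow> a \<notin> {P, Suc P} \<Longrightarrow> b \<notin> {P, Suc P} \<Longrightarrow>
    arrow_crossing t h a b = 0"
  by (rule arrow_crossing_eq_0_if) (unfold cyclic_order_def, elim insertE; simp; linarith)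

lemma arrow_crossing_separated:
  "(a < t \<and> a < h \<and> b < t \<and> b < h) \<or> (t < a \<and> h < a \<and> t < b \<and> h < b) \<Longrightarrow>
    arrow_crossing t h a b = 0"
  by (rule arrow_crossing_eq_0_if) (unfold cyclic_order_def, elim disjE conjE; simp; linarith)

section \<open>Invariance under the generalized Reidemeister moves\<close>

lemma agree_iff_labels: "agree (snd D) s (fst D) \<longleftrightarrow> (\<forall>c \<in> labels D. s c = snd D c)"
  unfolding agree_def labels_def ..

lemma chord_tuples_subset: "cs \<in> chord_tuples xs D \<Longrightarrow> set cs \<subseteq> labels D"
  unfolding chord_tuples_def by (auto simp: in_set_conv_nth)

lemma finite_chord_tuples: "finite (chord_tuples xs D)"
  by (rule finite_subset[OF _ finite_lists_length_eq[OF finite_labels, of D "length xs"]])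
    (auto simp: chord_tuples_def in_set_conv_nth)

lemma chord_tuples_cong:
  "labels D = labels D' \<Longrightarrow> (\<And>c. c \<in> labels D \<Longrightarrow> Ind D c = Ind D' c) \<Longrightarrow>
    chord_tuples xs D = chord_tuples xs D'"
  unfolding chord_tuples_def by auto

lemma a_inv_cong:
  assumes "chord_tuples xs D = chord_tuples xs D'" "\<And>c. c \<in> labels D \<Longrightarrow> snd D c = snd D' c"
  shows "a_inv xs D = a_inv xs D'"
proof -
  have "snd D (cs ! i) = snd D' (cs ! i)" if "cs \<in> chord_tuples xs D" "i < length xs" for cs i
    using that assms(2) by (simp add: chord_tuples_def)
  then show ?thesis
    unfolding a_inv_def assms(1)[symmetric] by (intro sum.cong prod.cong refl) auto
qed

lemma Ind_cong:
  assumes wf: "gauss_wf D" "gauss_wf D'" and labels: "labels D = labels D'" and c: "c \<in> labels D"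
    and T: "T \<subseteq> labels D"
    and outside: "\<And>d. d \<in> labels D - T \<Longrightarrow> d \<noteq> c \<Longrightarrow> chord_crossing (fst D) c d = chord_crossing (fst D') c d"
    and inside: "(\<Sum>d \<in> T - {c}. chord_crossing (fst D) c d * snd D d) =
      (\<Sum>d \<in> T - {c}. chord_crossing (fst D') c d * snd D d)"
    and s: "\<And>d. d \<in> labels D \<Longrightarrow> snd D d = snd D' d"
  shows "Ind D c = Ind D' c"
proof -
  have parts: "labels D - {c} = (labels D - T - {c}) \<union> (T - {c})"
    using T by auto
  have finite: "finite (labels D - T - {c})" "finite (T - {c})"
    using finite_labels[of D] finite_subset[OF T] by simp_all
  have split: "(\<Sum>d \<in> labels D - {c}. f d) = (\<Sum>d \<in> labels D - T - {c}. f d) + (\<Sum>d \<in> T - {c}. f d)"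
    for f :: "nat \<Rightarrow> int"
    unfolding parts by (rule sum.union_disjoint[OF finite]) blast
  have "Ind D c = (\<Sum>d \<in> labels D - T - {c}. chord_crossing (fst D) c d * snd D d) +
      (\<Sum>d \<in> T - {c}. chord_crossing (fst D) c d * snd D d)"
    unfolding Ind_eq_sum_chord_crossing[OF wf(1) c] by (rule split)
  also have "\<dots> = (\<Sum>d \<in> labels D - T - {c}. chord_crossing (fst D') c d * snd D' d) +
      (\<Sum>d \<in> T - {c}. chord_crossing (fst D') c d * snd D' d)"
    unfolding inside using outside s T by (intro arg_cong2[where f = "(+)"] sum.cong refl) auto
  also have "\<dots> = Ind D' c"
    unfolding Ind_eq_sum_chord_crossing[OF wf(2) c[unfolded labels]] labels[symmetric] by (rule split[symmetric])
  finally show ?thesis .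
qed

lemma Ind_delete_chords:
  assumes wf: "gauss_wf D" "gauss_wf D'" and w: "fst D = filter (\<lambda>e. fst e \<notin> N) (fst D')"
    and s: "\<forall>c \<in> labels D. snd D' c = snd D c" and c: "c \<in> labels D"
  shows "Ind D' c = Ind D c + (\<Sum>d \<in> labels D' \<inter> N. chord_crossing (fst D') c d * snd D' d)"
proof -
  have labels: "labels D = labels D' - N"
    unfolding labels_def w by auto
  have split: "labels D' - {c} = (labels D - {c}) \<union> (labels D' \<inter> N)" and c': "c \<in> labels D'"
    using labels c by auto
  have "Ind D' c = (\<Sum>d \<in> labels D - {c}. chord_crossing (fst D') c d * snd D' d) +
      (\<Sum>d \<in> labels D' \<inter> N. chord_crossing (fst D') c d * snd D' d)"
    unfolding Ind_eq_sum_chord_crossing[OF wf(2) c'] split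
    by (rule sum.union_disjoint) (use labels finite_labels in auto)
  also have "(\<Sum>d \<in> labels D - {c}. chord_crossing (fst D') c d * snd D' d) = Ind D c"
    unfolding Ind_eq_sum_chord_crossing[OF wf(1) c] w
    using labels c s gauss_wf_endpoint[OF wf(2)]
    by (intro sum.cong refl) (simp add: chord_crossing_filter gauss_wf_distinct[OF wf(2)])
  finally show ?thesis .
qed

lemma a_inv_rot_step:
  assumes wf: "gauss_wf D" "gauss_wf D'" and step: "rot_step D D'"
  shows "a_inv xs D = a_inv xs D'"
proof -
  have w: "fst D' = rotate1 (fst D)" and s: "\<forall>c \<in> labels D. snd D' c = snd D c"
    using step unfolding rot_step_def agree_iff_labels by auto
  have labels: "labels D = labels D'"
    unfolding labels_def w by simp
  have "Ind D c = Ind D' c" if "c \<in> labels D" for c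
    using that s gauss_wf_endpoint[OF wf(1)]
    by (intro Ind_cong[OF wf labels, where T = "{}"])
      (simp_all add: w chord_crossing_rotate1 gauss_wf_distinct[OF wf(1)])
  then show ?thesis
    using s labels by (intro a_inv_cong chord_tuples_cong) auto
qed

lemma Ind_relabel:
  assumes wf: "gauss_wf D" "gauss_wf D'" and \<pi>: "inj_on \<pi> (labels D)"
    and w: "fst D' = map (\<lambda>(i, b). (\<pi> i, b)) (fst D)" and s: "\<forall>i \<in> labels D. snd D' (\<pi> i) = snd D i"
    and c: "c \<in> labels D"
  shows "Ind D' (\<pi> c) = Ind D c"
proof -
  have labels: "labels D' = \<pi> ` labels D"
    unfolding labels_def w by force
  have inj: "inj_on (\<lambda>(i, b). (\<pi> i, b)) (set (fst D))"
    using \<pi> unfolding inj_on_def labels_def by force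
  have "labels D' - {\<pi> c} = \<pi> ` (labels D - {c})"
    using labels \<pi> c by (auto simp: inj_on_def)
  then have "Ind D' (\<pi> c) = (\<Sum>d \<in> labels D - {c}. chord_crossing (fst D') (\<pi> c) (\<pi> d) * snd D' (\<pi> d))"
    using Ind_eq_sum_chord_crossing[OF wf(2)] labels c \<pi>
    by (simp add: sum.reindex inj_on_diff)
  also have "\<dots> = (\<Sum>d \<in> labels D - {c}. chord_crossing (fst D) c d * snd D d)"
    using c s gauss_wf_endpoint[OF wf(1)] unfolding w
    by (intro sum.cong refl) (simp add: chord_crossing_map[OF gauss_wf_distinct[OF wf(1)] inj])
  finally show ?thesis
    using Ind_eq_sum_chord_crossing[OF wf(1) c] by simp
qed

lemma chord_tuples_relabel:
  assumes labels: "labels D' = \<pi> ` labels D" and Ind: "\<forall>c \<in> labels D. Ind D' (\<pi> c) = Ind D c"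
  shows "chord_tuples xs D' = map \<pi> ` chord_tuples xs D"
proof
  show "map \<pi> ` chord_tuples xs D \<subseteq> chord_tuples xs D'"
    using labels Ind by (auto simp: chord_tuples_def)
next
  show "chord_tuples xs D' \<subseteq> map \<pi> ` chord_tuples xs D"
  proof
    fix cs' assume cs': "cs' \<in> chord_tuples xs D'"
    then have "cs' \<in> lists (\<pi> ` labels D)"
      using labels chord_tuples_subset by blast
    then obtain cs where cs: "cs \<in> lists (labels D)" and cs'_eq: "cs' = map \<pi> cs"
      unfolding lists_image by blast
    then have "cs \<in> chord_tuples xs D"
      using cs' Ind by (auto simp: chord_tuples_def)
    then show "cs' \<in> map \<pi> ` chord_tuples xs D"
      using cs'_eq by blast
  qed
qed

lemma a_inv_relabel_step:
  assumes wf: "gauss_wf D" "gauss_wf D'" and step: "relabel_step D D'"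
  shows "a_inv xs D = a_inv xs D'"
proof -
  obtain \<pi> where \<pi>: "inj_on \<pi> (labels D)" and w: "fst D' = map (\<lambda>(i, b). (\<pi> i, b)) (fst D)"
    and s: "\<forall>i \<in> labels D. snd D' (\<pi> i) = snd D i"
    using step unfolding relabel_step_def by blast
  have labels: "labels D' = \<pi> ` labels D"
    unfolding labels_def w by force
  have tuples: "chord_tuples xs D' = map \<pi> ` chord_tuples xs D"
    using chord_tuples_relabel labels Ind_relabel[OF wf \<pi> w s] by blast
  have "inj_on (map \<pi>) (chord_tuples xs D)"
  proof (rule inj_onI)
    fix cs cs' assume "cs \<in> chord_tuples xs D" "cs' \<in> chord_tuples xs D" "map \<pi> cs = map \<pi> cs'"
    then show "cs = cs'"
      using \<pi> chord_tuples_subset inj_on_map_eq_map by (metis inj_on_subset le_sup_iff)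
  qed
  then have "a_inv xs D' = (\<Sum>cs \<in> chord_tuples xs D. \<Prod>i < length xs. snd D' (\<pi> (cs ! i)))"
    unfolding a_inv_def tuples by (simp add: sum.reindex chord_tuples_def)
  also have "\<dots> = a_inv xs D"
    unfolding a_inv_def using s by (intro sum.cong prod.cong refl) (simp add: chord_tuples_def)
  finally show ?thesis ..
qed

lemma chord_crossing_isolated:
  assumes w: "distinct w" "w = u @ (i, b) # (i, \<not> b) # v" and c: "c \<noteq> i" "\<And>b. (c, b) \<in> set w"
  shows "chord_crossing w c i = 0" "chord_crossing w i c = 0"
proof -
  let ?P = "length u"
  have i: "pos w (i, b) = ?P" "pos w (i, \<not> b) = Suc ?P"
    using w by (simp_all add: pos_append_right pos_Cons)
  then have i': "pos w (i, b') \<in> {?P, Suc ?P}" for b'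
    by (cases "b' = b") auto
  have "(i, b'') \<in> set w" for b''
    using w(2) by (cases "b'' = b") auto
  then have "pos w (c, b') \<noteq> pos w (i, b'')" for b' b''
    using w(1) c by (simp add: pos_eq_pos_iff)
  then have c': "pos w (c, b') \<notin> {?P, Suc ?P}" for b'
    using i by (metis insert_iff singletonD)
  show "chord_crossing w c i = 0"
    unfolding chord_crossing_def
    by (rule arrow_crossing_eq_0_if, rule cyclic_order_adjacent(1)[where P = ?P]) (use i' c' in simp_all)
  show "chord_crossing w i c = 0"
    unfolding chord_crossing_def
    by (rule arrow_crossing_adjacent_ends[where P = ?P]) (use i' c' in simp_all)
qed

lemma a_inv_R1_step:
  assumes wf: "gauss_wf D" "gauss_wf D'" and step: "R1_step D D'" and nonzero: "0 \<notin> set xs"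
  shows "a_inv xs D = a_inv xs D'"
proof -
  obtain u v i b where wD: "fst D = u @ v" and wD': "fst D' = u @ (i, b) # (i, \<not> b) # v"
    and s: "\<forall>c \<in> labels D. snd D' c = snd D c"
    using step unfolding R1_step_def agree_iff_labels by auto
  have dist: "distinct (fst D')"
    using gauss_wf_distinct[OF wf(2)] .
  have new: "fst e \<noteq> i" if "e \<in> set u \<union> set v" for e
  proof
    assume "fst e = i"
    then have "e \<in> {(i, b), (i, \<not> b)}"
      by (cases e) auto
    then show False
      using dist that unfolding wD' by auto
  qed
  then have "filter (\<lambda>e. fst e \<notin> {i}) u = u" "filter (\<lambda>e. fst e \<notin> {i}) v = v"
    by (auto intro!: filter_True)
  then have filter: "fst D = filter (\<lambda>e. fst e \<notin> {i}) (fst D')"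
    unfolding wD wD' by simp
  have labels: "labels D' = insert i (labels D)" "i \<notin> labels D"
    unfolding labels_def wD wD' using new by auto
  have crossing: "chord_crossing (fst D') c i = 0" "chord_crossing (fst D') i c = 0" if "c \<in> labels D" for c
  proof -
    have "c \<noteq> i" "\<And>b. (c, b) \<in> set (fst D')"
      using that labels gauss_wf_endpoint[OF wf(2)] by auto
    then show "chord_crossing (fst D') c i = 0" "chord_crossing (fst D') i c = 0"
      using chord_crossing_isolated[OF dist wD'] by simp_all
  qed
  have Ind: "Ind D' c = Ind D c" if "c \<in> labels D" for c
    using Ind_delete_chords[OF wf filter s that] labels crossing[OF that] by simp
  have "Ind D' i = 0"
    using labels crossing Ind_eq_sum_chord_crossing[OF wf(2), of i] by simp
  then have "c \<in> labels D' \<and> Ind D' c = x \<longleftrightarrow> c \<in> labels D \<and> Ind D c = x" if "x \<in> set xs" for c x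
    using that nonzero labels Ind by auto
  then have "chord_tuples xs D' = chord_tuples xs D"
    unfolding chord_tuples_def by (simp add: nth_mem)
  then show ?thesis
    using s by (intro a_inv_cong) auto
qed

lemma R2_chord_crossings:
  assumes w: "distinct w" "w = u @ (i, True) # (j, True) # v @ (k, False) # (l, False) # x"
    and kl: "(k, l) = (i, j) \<or> (k, l) = (j, i)"
  shows "chord_crossing w i j = - chord_crossing w j i"
    and "c \<notin> {i, j} \<Longrightarrow> (\<And>b. (c, b) \<in> set w) \<Longrightarrow> chord_crossing w c i = chord_crossing w c j"
    and "c \<notin> {i, j} \<Longrightarrow> (\<And>b. (c, b) \<in> set w) \<Longrightarrow> chord_crossing w i c = chord_crossing w j c"
proof -
  let ?P = "length u" and ?Q = "length u + 2 + length v"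
  have tails: "pos w (i, True) = ?P" "pos w (j, True) = Suc ?P"
    and heads: "pos w (k, False) = ?Q" "pos w (l, False) = Suc ?Q"
    using w by (simp_all add: pos_append_right pos_Cons)
  have heads': "pos w (i, False) \<in> {?Q, Suc ?Q}" "pos w (j, False) \<in> {?Q, Suc ?Q}"
    using heads kl by auto
  show "chord_crossing w i j = - chord_crossing w j i"
    using kl tails heads unfolding chord_crossing_def arrow_crossing_def cyclic_order_def by auto
  assume c: "c \<notin> {i, j}" "\<And>b. (c, b) \<in> set w"
  have "(e, b) \<in> set w" if "e \<in> {i, j}" for e b
    using that kl w(2) by (cases b) auto
  then have "pos w (c, b) \<noteq> pos w (e, b')" if "e \<in> {i, j}" for b b' e
    using that w(1) c by (auto simp: pos_eq_pos_iff)
  moreover have "{?P, Suc ?P, ?Q, Suc ?Q} = {pos w (i, True), pos w (j, True), pos w (k, False), pos w (l, False)}"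
    using tails heads by simp
  ultimately have c': "pos w (c, b) \<notin> {?P, Suc ?P, ?Q, Suc ?Q}" for b
    using kl by auto
  have "cyclic_order t ?P h = cyclic_order t (Suc ?P) h"
    if "t \<notin> {?P, Suc ?P, ?Q, Suc ?Q}" "h \<notin> {?P, Suc ?P, ?Q, Suc ?Q}" for t h
    by (rule cyclic_order_adjacent(1)[where P = ?P]) (use that in auto)
  moreover have "cyclic_order t (pos w (i, False)) h = cyclic_order t (pos w (j, False)) h"
    if "t \<notin> {?P, Suc ?P, ?Q, Suc ?Q}" "h \<notin> {?P, Suc ?P, ?Q, Suc ?Q}" for t h
    by (rule cyclic_order_adjacent(1)[where P = ?Q]) (use that heads' in auto)
  ultimately show "chord_crossing w c i = chord_crossing w c j"
    unfolding chord_crossing_def arrow_crossing_def tails using c' by simp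
  have "cyclic_order ?P a h = cyclic_order (Suc ?P) a h"
    if "a \<notin> {?P, Suc ?P, ?Q, Suc ?Q}" "h \<in> {?Q, Suc ?Q}" for a h
    by (rule cyclic_order_adjacent(2)[where P = ?P]) (use that in auto)
  moreover have "cyclic_order (Suc ?P) a (pos w (i, False)) = cyclic_order (Suc ?P) a (pos w (j, False))"
    if "a \<notin> {?P, Suc ?P, ?Q, Suc ?Q}" for a
    by (rule cyclic_order_adjacent(3)[where P = ?Q]) (use that heads' in auto)
  ultimately show "chord_crossing w i c = chord_crossing w j c"
    unfolding chord_crossing_def arrow_crossing_def tails using c' heads' by simp
qed

lemma R2_step_normal_form:
  assumes wf: "gauss_wf D" "gauss_wf D'" and step: "R2_step D D'"
  obtains u v x i j k l where "(k, l) = (i, j) \<or> (k, l) = (j, i)"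
    "fst D' = u @ (i, True) # (j, True) # v @ (k, False) # (l, False) # x"
    "fst D = filter (\<lambda>e. fst e \<notin> {i, j}) (fst D')"
    "labels D' = insert i (insert j (labels D))" "i \<notin> labels D" "j \<notin> labels D" "i \<noteq> j"
    "snd D' i = - snd D' j" "\<forall>c \<in> labels D. snd D' c = snd D c"
proof -
  obtain u v x i j k l where wD: "fst D = u @ v @ x" and kl: "(k, l) = (i, j) \<or> (k, l) = (j, i)"
    and wD0: "fst D' = u @ [(i, True), (j, True)] @ v @ [(k, False), (l, False)] @ x"
    and sij: "snd D' i = - snd D' j" and s: "\<forall>c \<in> labels D. snd D' c = snd D c"
    using step unfolding R2_step_def agree_iff_labels by blast
  have wD': "fst D' = u @ (i, True) # (j, True) # v @ (k, False) # (l, False) # x"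
    using wD0 by simp
  have dist: "distinct (fst D')"
    using gauss_wf_distinct[OF wf(2)] .
  have new: "fst e \<notin> {i, j}" if "e \<in> set u \<union> set v \<union> set x" for e
  proof
    assume "fst e \<in> {i, j}"
    then have "e \<in> {(i, True), (j, True), (k, False), (l, False)}"
      using kl by (cases e; cases "snd e") auto
    then show False
      using dist that unfolding wD' by auto
  qed
  then have "filter (\<lambda>e. fst e \<notin> {i, j}) y = y" if "y \<in> {u, v, x}" for y
    using that by (auto intro!: filter_True)
  then have "fst D = filter (\<lambda>e. fst e \<notin> {i, j}) (fst D')"
    unfolding wD wD' using kl by auto
  moreover have "labels D' = insert i (insert j (labels D))" "i \<notin> labels D" "j \<notin> labels D"
    unfolding labels_def wD wD' using new kl by (auto simp: image_iff)
  moreover have "i \<noteq> j"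
    using dist unfolding wD' by auto
  ultimately show thesis
    using that[OF kl wD'] sij s by blast
qed

lemma R2_step_Ind:
  assumes wf: "gauss_wf D" "gauss_wf D'" and step: "R2_step D D'"
  obtains i j where "labels D' = insert i (insert j (labels D))" "i \<notin> labels D" "j \<notin> labels D"
    "i \<noteq> j" "snd D' i = - snd D' j" "Ind D' i = Ind D' j"
    "\<And>c. c \<in> labels D \<Longrightarrow> Ind D' c = Ind D c \<and> snd D' c = snd D c"
proof -
  obtain u v x i j k l where kl: "(k, l) = (i, j) \<or> (k, l) = (j, i)"
    and wD': "fst D' = u @ (i, True) # (j, True) # v @ (k, False) # (l, False) # x"
    and filter: "fst D = filter (\<lambda>e. fst e \<notin> {i, j}) (fst D')"
    and labels: "labels D' = insert i (insert j (labels D))" "i \<notin> labels D" "j \<notin> labels D" "i \<noteq> j"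
    and sij: "snd D' i = - snd D' j" and s: "\<forall>c \<in> labels D. snd D' c = snd D c"
    by (rule R2_step_normal_form[OF wf step])
  note crossing = R2_chord_crossings[OF gauss_wf_distinct[OF wf(2)] wD' kl]
  have ends: "c \<notin> {i, j}" "\<And>b. (c, b) \<in> set (fst D')" if "c \<in> labels D" for c
    using that labels gauss_wf_endpoint[OF wf(2)] by auto
  have "Ind D' c = Ind D c" if "c \<in> labels D" for c
    using Ind_delete_chords[OF wf filter s that] labels crossing(2)[OF ends[OF that]] sij by simp
  moreover have "Ind D' i = Ind D' j"
  proof -
    have "labels D' - {i} = insert j (labels D)" "labels D' - {j} = insert i (labels D)"
      using labels by auto
    moreover have "(\<Sum>d \<in> labels D. chord_crossing (fst D') i d * snd D' d) =
        (\<Sum>d \<in> labels D. chord_crossing (fst D') j d * snd D' d)"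
      using crossing(3)[OF ends] by simp
    ultimately show ?thesis
      using Ind_eq_sum_chord_crossing[OF wf(2)] labels crossing(1) sij finite_labels[of D] by simp
  qed
  ultimately show thesis
    using that labels sij s by blast
qed

text \<open>A tuple meets \<open>{i, j}\<close> at most once, as the \<open>x\<^sub>i\<close> are distinct; exchanging \<open>i\<close> and \<open>j\<close>
  is then a sign-reversing involution on the tuples that meet \<open>{i, j}\<close>.\<close>

lemma a_inv_cancel_pair:
  assumes xs: "distinct xs" and ij: "i \<noteq> j" "i \<in> labels D" "j \<in> labels D"
    and Ind: "Ind D i = Ind D j" and s: "snd D i = - snd D j"
  shows "a_inv xs D = (\<Sum>cs \<in> {cs \<in> chord_tuples xs D. set cs \<inter> {i, j} = {}}. \<Prod>m < length xs. snd D (cs ! m))"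
proof -
  let ?A = "chord_tuples xs D" and ?B = "{cs \<in> chord_tuples xs D. set cs \<inter> {i, j} = {}}"
  let ?f = "\<lambda>cs. \<Prod>m < length xs. snd D (cs ! m)"
  define \<tau> where "\<tau> c = (if c = i then j else if c = j then i else c)" for c
  have \<tau>: "\<tau> (\<tau> c) = c" "Ind D (\<tau> c) = Ind D c" "\<tau> c \<in> labels D \<longleftrightarrow> c \<in> labels D" for c
    unfolding \<tau>_def using ij Ind by auto
  have "sum ?f (?A - ?B) = 0"
  proof (rule sum_involution_eq_0[where h = "map \<tau>"])
    fix cs assume cs: "cs \<in> ?A - ?B"
    then have length: "length cs = length xs"
      by (simp add: chord_tuples_def)
    obtain m0 where m0: "m0 < length xs" "cs ! m0 \<in> {i, j}"
      using cs length by (auto simp: in_set_conv_nth)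
    have "xs ! m = Ind D i" if "m < length xs" "cs ! m \<in> {i, j}" for m
      using cs that Ind by (auto simp: chord_tuples_def)
    then have others: "\<tau> (cs ! m) = cs ! m" if "m < length xs" "m \<noteq> m0" for m
      using that m0 xs unfolding \<tau>_def by (metis insertCI nth_eq_iff_index_eq)
    have \<tau>_m0: "\<tau> (cs ! m0) \<noteq> cs ! m0" "\<tau> (cs ! m0) \<in> {i, j}" "snd D (\<tau> (cs ! m0)) = - snd D (cs ! m0)"
      using m0(2) ij s unfolding \<tau>_def by auto
    show "map \<tau> cs \<in> ?A - ?B"
      using cs length m0 \<tau>(2,3) \<tau>_m0(2) by (auto simp: chord_tuples_def in_set_conv_nth)
    show "map \<tau> (map \<tau> cs) = cs"
      using \<tau>(1) by (simp add: map_idI)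
    show "map \<tau> cs \<noteq> cs"
      using \<tau>_m0(1) m0 length by (metis nth_map)
    have "?f (map \<tau> cs) = snd D (\<tau> (cs ! m0)) * (\<Prod>m \<in> {..<length xs} - {m0}. snd D (\<tau> (cs ! m)))"
      using m0 length by (simp add: prod.remove)
    also have "\<dots> = - (snd D (cs ! m0) * (\<Prod>m \<in> {..<length xs} - {m0}. snd D (cs ! m)))"
      using \<tau>_m0(3) others by simp
    also have "\<dots> = - ?f cs"
      using m0 by (simp add: prod.remove)
    finally show "?f (map \<tau> cs) + ?f cs = 0"
      by simp
  qed
  then show ?thesis
    unfolding a_inv_def using sum.subset_diff[of ?B ?A ?f] finite_chord_tuples by auto
qed

lemma chord_tuples_restrict:
  assumes "labels D \<subseteq> labels D'" "\<And>c. c \<in> labels D \<Longrightarrow> Ind D' c = Ind D c"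
  shows "chord_tuples xs D = {cs \<in> chord_tuples xs D'. set cs \<subseteq> labels D}"
proof (intro set_eqI iffI)
  fix cs assume cs: "cs \<in> chord_tuples xs D"
  then have "set cs \<subseteq> labels D"
    by (rule chord_tuples_subset)
  then show "cs \<in> {cs \<in> chord_tuples xs D'. set cs \<subseteq> labels D}"
    using cs assms by (auto simp: chord_tuples_def)
next
  fix cs assume "cs \<in> {cs \<in> chord_tuples xs D'. set cs \<subseteq> labels D}"
  then have length: "length cs = length xs" and set: "set cs \<subseteq> labels D"
    and slots: "\<And>m. m < length xs \<Longrightarrow> Ind D' (cs ! m) = xs ! m"
    by (auto simp: chord_tuples_def)
  have "cs ! m \<in> labels D" if "m < length xs" for m
    using set length that nth_mem by (metis subsetD)
  then show "cs \<in> chord_tuples xs D"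
    using assms(2) slots length by (simp add: chord_tuples_def)
qed

lemma a_inv_R2_step:
  assumes wf: "gauss_wf D" "gauss_wf D'" and step: "R2_step D D'" and xs: "distinct xs"
  shows "a_inv xs D = a_inv xs D'"
proof -
  obtain i j where labels: "labels D' = insert i (insert j (labels D))" "i \<notin> labels D" "j \<notin> labels D"
    and ij: "i \<noteq> j" "snd D' i = - snd D' j" "Ind D' i = Ind D' j"
    and old: "\<And>c. c \<in> labels D \<Longrightarrow> Ind D' c = Ind D c \<and> snd D' c = snd D c"
    using R2_step_Ind[OF wf step] by blast
  have Ind: "Ind D' c = Ind D c" and s: "snd D' c = snd D c" if "c \<in> labels D" for c
    using old[OF that] by simp_all
  have "a_inv xs D' = (\<Sum>cs \<in> {cs \<in> chord_tuples xs D'. set cs \<inter> {i, j} = {}}. \<Prod>m < length xs. snd D' (cs ! m))"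
    using labels ij by (intro a_inv_cancel_pair[OF xs]) auto
  also have "{cs \<in> chord_tuples xs D'. set cs \<inter> {i, j} = {}} = {cs \<in> chord_tuples xs D'. set cs \<subseteq> labels D}"
    using labels chord_tuples_subset by blast
  also have "\<dots> = chord_tuples xs D"
    using labels Ind by (intro chord_tuples_restrict[symmetric]) auto
  also have "(\<Sum>cs \<in> chord_tuples xs D. \<Prod>m < length xs. snd D' (cs ! m)) = a_inv xs D"
    unfolding a_inv_def using s by (intro sum.cong prod.cong refl) (simp add: chord_tuples_def)
  finally show ?thesis ..
qed

definition R3_segment_orders ::
    "bool \<Rightarrow> bool \<Rightarrow> bool \<Rightarrow> nat \<Rightarrow> nat \<Rightarrow> nat \<Rightarrow>
      ((nat \<times> bool) list \<times> (nat \<times> bool) list \<times> (nat \<times> bool) list) set" where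
  "R3_segment_orders eT eM eB p q r = (let ST = segT eT p q; SM = segM eM p r; SB = segB eB q r in
     {(ST, SM, SB), (ST, SB, SM), (SM, ST, SB), (SM, SB, ST), (SB, ST, SM), (SB, SM, ST)})"

lemma R3_segments:
  assumes A: "(A1, A2, A3) \<in> R3_segment_orders eT eM eB p q r"
  shows "set A1 \<union> set A2 \<union> set A3 = {p, q, r} \<times> UNIV"
    and "distinct (A1 @ A2 @ A3) \<longleftrightarrow> distinct [p, q, r]"
    and "B \<in> {A1, A2, A3} \<Longrightarrow> distinct [p, q, r] \<Longrightarrow> \<exists>e e'. B = [e, e'] \<and> fst e \<noteq> fst e' \<and> {fst e, fst e'} \<subseteq> {p, q, r}"
proof -
  let ?ST = "segT eT p q" and ?SM = "segM eM p r" and ?SB = "segB eB q r"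
  have perm: "set A1 \<union> set A2 \<union> set A3 = set ?ST \<union> set ?SM \<union> set ?SB"
    "distinct (A1 @ A2 @ A3) \<longleftrightarrow> distinct (?ST @ ?SM @ ?SB)" "{A1, A2, A3} = {?ST, ?SM, ?SB}"
    using A unfolding R3_segment_orders_def Let_def by (auto simp: Int_commute)
  show "set A1 \<union> set A2 \<union> set A3 = {p, q, r} \<times> UNIV"
    unfolding perm by (cases eT; cases eM; cases eB) (auto simp: segT_def segM_def segB_def)
  show "distinct (A1 @ A2 @ A3) \<longleftrightarrow> distinct [p, q, r]"
    unfolding perm by (cases eT; cases eM; cases eB) (auto simp: segT_def segM_def segB_def)
  show "B \<in> {A1, A2, A3} \<Longrightarrow> distinct [p, q, r] \<Longrightarrow> \<exists>e e'. B = [e, e'] \<and> fst e \<noteq> fst e' \<and> {fst e, fst e'} \<subseteq> {p, q, r}"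
    unfolding perm by (cases eT; cases eM; cases eB) (auto simp: segT_def segM_def segB_def)
qed

lemma chord_crossing_eq_pos_rec:
  assumes "distinct w" "{c, d} \<times> UNIV \<subseteq> set w"
  shows "chord_crossing w c d =
    arrow_crossing (pos_rec w (c, True)) (pos_rec w (c, False)) (pos_rec w (d, True)) (pos_rec w (d, False))"
proof -
  have "(e, b) \<in> set w" if "e \<in> {c, d}" for e b
    using assms(2) that by blast
  then show ?thesis
    unfolding chord_crossing_def using assms(1) by (simp add: pos_eq_pos_rec)
qed

text \<open>The sign condition of the third move is what makes these sums agree; the check runs through
  the six orders of the segments and the eight orientations of the strands.\<close>

lemma R3_crossing_sums:
  fixes s :: "nat \<Rightarrow> int"
  assumes A: "(A1, A2, A3) \<in> R3_segment_orders eT eM eB p q r" and pqr: "distinct [p, q, r]"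
    and sg: "s p * sgnb eT * sgnb eM = - s q * sgnb eT * sgnb eB"
      "- s q * sgnb eT * sgnb eB = s r * sgnb eM * sgnb eB"
  defines "W \<equiv> A1 @ A2 @ A3" and "W' \<equiv> rev A1 @ rev A2 @ rev A3"
  shows "chord_crossing W p q * s q + chord_crossing W p r * s r =
      chord_crossing W' p q * s q + chord_crossing W' p r * s r"
    and "chord_crossing W q p * s p + chord_crossing W q r * s r =
      chord_crossing W' q p * s p + chord_crossing W' q r * s r"
    and "chord_crossing W r p * s p + chord_crossing W r q * s q =
      chord_crossing W' r p * s p + chord_crossing W' r q * s q"
proof -
  define cr where "cr (w :: (nat \<times> bool) list) c d =
    arrow_crossing (pos_rec w (c, True)) (pos_rec w (c, False)) (pos_rec w (d, True)) (pos_rec w (d, False))"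
    for w c d
  have "distinct W" "distinct W'" "set W = {p, q, r} \<times> UNIV" "set W' = {p, q, r} \<times> UNIV"
    using R3_segments(1,2)[OF A] pqr unfolding W_def W'_def by auto
  then have cr: "chord_crossing w c d = cr w c d" if "w \<in> {W, W'}" "c \<in> {p, q, r}" "d \<in> {p, q, r}" for w c d
    unfolding cr_def using that by (auto intro!: chord_crossing_eq_pos_rec)
  have "cr W p q * s q + cr W p r * s r = cr W' p q * s q + cr W' p r * s r \<and>
      cr W q p * s p + cr W q r * s r = cr W' q p * s p + cr W' q r * s r \<and>
      cr W r p * s p + cr W r q * s q = cr W' r p * s p + cr W' r q * s q"
    using A sg pqr unfolding W_def W'_def R3_segment_orders_def Let_def cr_def
    apply (simp only: insert_iff empty_iff prod.inject simp_thms)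
    apply (elim disjE conjE)
    by (hypsubst; cases eT; cases eM; cases eB;
        simp add: segT_def segM_def segB_def sgnb_def arrow_crossing_def cyclic_order_def; linarith)+
  then show "chord_crossing W p q * s q + chord_crossing W p r * s r =
      chord_crossing W' p q * s q + chord_crossing W' p r * s r"
    and "chord_crossing W q p * s p + chord_crossing W q r * s r =
      chord_crossing W' q p * s p + chord_crossing W' q r * s r"
    and "chord_crossing W r p * s p + chord_crossing W r q * s q =
      chord_crossing W' r p * s p + chord_crossing W' r q * s q"
    by (simp_all add: cr)
qed

lemma filter_rev_eq_if_length_le_1:
  assumes "length (filter P xs) \<le> 1"
  shows "filter P (rev xs) = filter P xs"
proof -
  have "rev ys = ys" if "length ys \<le> 1" for ys :: "'a list"
    using that by (cases ys) auto
  then show ?thesis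
    using assms by (simp add: rev_filter[symmetric])
qed

lemma chord_crossing_reverse_segments:
  assumes w: "distinct w" "w = u @ A1 @ v @ A2 @ x @ A3 @ y"
    and w': "w' = u @ rev A1 @ v @ rev A2 @ x @ rev A3 @ y"
    and cd: "{c, d} \<times> UNIV \<subseteq> set w"
    and segments: "\<And>B. B \<in> {A1, A2, A3} \<Longrightarrow> length (filter (\<lambda>e. fst e \<in> {c, d}) B) \<le> 1"
  shows "chord_crossing w' c d = chord_crossing w c d"
proof -
  let ?Q = "\<lambda>e. fst e \<in> {c, d}"
  have "filter ?Q (rev B) = filter ?Q B" if "B \<in> {A1, A2, A3}" for B
    using segments[OF that] by (rule filter_rev_eq_if_length_le_1)
  then have filter: "filter ?Q w' = filter ?Q w"
    unfolding w w' by simp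
  have ends: "(e, b) \<in> set w" "(e, b) \<in> set w'" if "e \<in> {c, d}" for e b
    using that cd unfolding w w' by auto
  have "distinct w'"
    using w unfolding w' by auto
  then have "chord_crossing w' c d = chord_crossing (filter ?Q w') c d"
    using ends by (intro chord_crossing_filter[symmetric]) auto
  also have "\<dots> = chord_crossing w c d"
    unfolding filter using w(1) ends by (intro chord_crossing_filter) auto
  finally show ?thesis .
qed

lemma R3_step_normal_form:
  assumes wf: "gauss_wf D" "gauss_wf D'" and step: "R3_step D D'"
  obtains u v x y A1 A2 A3 p q r eT eM eB where
    "(A1, A2, A3) \<in> R3_segment_orders eT eM eB p q r" "distinct [p, q, r]"
    "fst D = u @ A1 @ v @ A2 @ x @ A3 @ y" "fst D' = u @ rev A1 @ v @ rev A2 @ x @ rev A3 @ y"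
    "snd D p * sgnb eT * sgnb eM = - snd D q * sgnb eT * sgnb eB"
    "- snd D q * sgnb eT * sgnb eB = snd D r * sgnb eM * sgnb eB"
    "\<forall>c \<in> labels D. snd D' c = snd D c"
    "filter (\<lambda>e. fst e \<in> {p, q, r}) (fst D) = A1 @ A2 @ A3"
    "filter (\<lambda>e. fst e \<in> {p, q, r}) (fst D') = rev A1 @ rev A2 @ rev A3"
proof -
  obtain u v x y A1 A2 A3 p q r eT eM eB where A: "(A1, A2, A3) \<in> R3_segment_orders eT eM eB p q r"
    and wD: "fst D = u @ A1 @ v @ A2 @ x @ A3 @ y" and wD': "fst D' = u @ rev A1 @ v @ rev A2 @ x @ rev A3 @ y"
    and signs: "snd D p * sgnb eT * sgnb eM = - snd D q * sgnb eT * sgnb eB"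
      "- snd D q * sgnb eT * sgnb eB = snd D r * sgnb eM * sgnb eB"
    and s: "\<forall>c \<in> labels D. snd D' c = snd D c"
    using step unfolding R3_step_def R3_segment_orders_def agree_iff_labels Let_def by blast
  have dist: "distinct (fst D)"
    using gauss_wf_distinct[OF wf(1)] .
  then have "distinct (A1 @ A2 @ A3)"
    unfolding wD by auto
  then have pqr: "distinct [p, q, r]"
    using R3_segments(2)[OF A] by blast
  have disjoint: "set (A1 @ A2 @ A3) \<inter> set (u @ v @ x @ y) = {}"
    using dist unfolding wD by (simp add: Int_Un_distrib Int_Un_distrib2 Int_commute)
  let ?P = "\<lambda>e. fst e \<in> {p, q, r}"
  have "\<not> ?P e" if "e \<in> set (u @ v @ x @ y)" for e
  proof
    assume "?P e"
    then have "e \<in> set (A1 @ A2 @ A3)"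
      using R3_segments(1)[OF A] by (cases e) auto
    then show False
      using disjoint that by blast
  qed
  then have outside: "filter ?P u = []" "filter ?P v = []" "filter ?P x = []" "filter ?P y = []"
    by (simp_all add: filter_empty_conv)
  have "set (A1 @ A2 @ A3) = {p, q, r} \<times> UNIV"
    using R3_segments(1)[OF A] by (simp add: Un_assoc)
  then have "filter ?P B = B" if "B \<in> {A1, A2, A3, rev A1, rev A2, rev A3}" for B
    using that by (intro filter_True) fastforce
  then have "filter ?P (fst D) = A1 @ A2 @ A3" "filter ?P (fst D') = rev A1 @ rev A2 @ rev A3"
    unfolding wD wD' using outside by simp_all
  then show thesis
    using that[OF A pqr wD wD' signs s] by blast
qed

lemma R3_chord_crossing_outside:
  assumes A: "(A1, A2, A3) \<in> R3_segment_orders eT eM eB p q r" and pqr: "distinct [p, q, r]"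
    and w: "distinct w" "w = u @ A1 @ v @ A2 @ x @ A3 @ y"
    and w': "w' = u @ rev A1 @ v @ rev A2 @ x @ rev A3 @ y"
    and cd: "{c, d} \<times> UNIV \<subseteq> set w" "\<not> {c, d} \<subseteq> {p, q, r}"
  shows "chord_crossing w' c d = chord_crossing w c d"
proof (rule chord_crossing_reverse_segments[OF w w' cd(1)])
  fix B assume "B \<in> {A1, A2, A3}"
  then obtain e e' where "B = [e, e']" "fst e \<noteq> fst e'" "{fst e, fst e'} \<subseteq> {p, q, r}"
    using R3_segments(3)[OF A _ pqr] by blast
  then show "length (filter (\<lambda>e. fst e \<in> {c, d}) B) \<le> 1"
    using cd(2) by auto
qed

lemma R3_triangle_crossing_sums:
  fixes s :: "nat \<Rightarrow> int"
  assumes A: "(A1, A2, A3) \<in> R3_segment_orders eT eM eB p q r" and pqr: "distinct [p, q, r]"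
    and sg: "s p * sgnb eT * sgnb eM = - s q * sgnb eT * sgnb eB"
      "- s q * sgnb eT * sgnb eB = s r * sgnb eM * sgnb eB"
    and w: "distinct w" "filter (\<lambda>e. fst e \<in> {p, q, r}) w = A1 @ A2 @ A3"
    and w': "distinct w'" "filter (\<lambda>e. fst e \<in> {p, q, r}) w' = rev A1 @ rev A2 @ rev A3"
    and c: "c \<in> {p, q, r}"
  shows "(\<Sum>d \<in> {p, q, r} - {c}. chord_crossing w c d * s d) =
    (\<Sum>d \<in> {p, q, r} - {c}. chord_crossing w' c d * s d)"
proof -
  have "set (A1 @ A2 @ A3) \<subseteq> set w" "set (rev A1 @ rev A2 @ rev A3) \<subseteq> set w'"
    unfolding w(2)[symmetric] w'(2)[symmetric] by auto
  then have ends: "{p, q, r} \<times> UNIV \<subseteq> set w" "{p, q, r} \<times> UNIV \<subseteq> set w'"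
    using R3_segments(1)[OF A] by auto
  have "chord_crossing w c d = chord_crossing (A1 @ A2 @ A3) c d"
    "chord_crossing w' c d = chord_crossing (rev A1 @ rev A2 @ rev A3) c d"
    if "c \<in> {p, q, r}" "d \<in> {p, q, r}" for c d
  proof -
    have "(e, b) \<in> set w" "(e, b) \<in> set w'" if "e \<in> {c, d}" for e b
      using that ends \<open>c \<in> {p, q, r}\<close> \<open>d \<in> {p, q, r}\<close> by auto
    then show "chord_crossing w c d = chord_crossing (A1 @ A2 @ A3) c d"
      "chord_crossing w' c d = chord_crossing (rev A1 @ rev A2 @ rev A3) c d"
      unfolding w(2)[symmetric] w'(2)[symmetric] using that w(1) w'(1)
      by (auto intro: chord_crossing_filter[symmetric])
  qed
  moreover have "{p, q, r} - {p} = {q, r}" "{p, q, r} - {q} = {p, r}" "{p, q, r} - {r} = {p, q}"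
    using pqr by auto
  ultimately show ?thesis
    using c R3_crossing_sums[OF A pqr sg] pqr by auto
qed

lemma R3_step_Ind:
  assumes wf: "gauss_wf D" "gauss_wf D'" and step: "R3_step D D'" and c: "c \<in> labels D"
  shows "Ind D' c = Ind D c"
proof -
  obtain u v x y A1 A2 A3 p q r eT eM eB where A: "(A1, A2, A3) \<in> R3_segment_orders eT eM eB p q r"
    and pqr: "distinct [p, q, r]"
    and wD: "fst D = u @ A1 @ v @ A2 @ x @ A3 @ y" and wD': "fst D' = u @ rev A1 @ v @ rev A2 @ x @ rev A3 @ y"
    and signs: "snd D p * sgnb eT * sgnb eM = - snd D q * sgnb eT * sgnb eB"
      "- snd D q * sgnb eT * sgnb eB = snd D r * sgnb eM * sgnb eB"
    and s: "\<forall>c \<in> labels D. snd D' c = snd D c"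
    and filter: "filter (\<lambda>e. fst e \<in> {p, q, r}) (fst D) = A1 @ A2 @ A3"
      "filter (\<lambda>e. fst e \<in> {p, q, r}) (fst D') = rev A1 @ rev A2 @ rev A3"
    by (rule R3_step_normal_form[OF wf step])
  have labels: "labels D' = labels D"
    unfolding labels_def wD wD' by auto
  have "fst ` (set A1 \<union> set A2 \<union> set A3) = {p, q, r}"
    using R3_segments(1)[OF A] by simp
  then have triangle: "{p, q, r} \<subseteq> labels D"
    unfolding labels_def wD by auto
  have outside: "chord_crossing (fst D) c d = chord_crossing (fst D') c d" if "d \<in> labels D - {p, q, r}" for d
    using that c gauss_wf_endpoint[OF wf(1)]
    by (intro R3_chord_crossing_outside[OF A pqr gauss_wf_distinct[OF wf(1)] wD wD', symmetric]) auto
  have "(\<Sum>d \<in> {p, q, r} - {c}. chord_crossing (fst D) c d * snd D d) =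
      (\<Sum>d \<in> {p, q, r} - {c}. chord_crossing (fst D') c d * snd D d)"
  proof (cases "c \<in> {p, q, r}")
    case True
    then show ?thesis
      using gauss_wf_distinct wf filter by (intro R3_triangle_crossing_sums[OF A pqr signs]) auto
  next
    case False
    have "chord_crossing (fst D) c d = chord_crossing (fst D') c d" if "d \<in> {p, q, r}" for d
      using that False c triangle gauss_wf_endpoint[OF wf(1)]
      by (intro R3_chord_crossing_outside[OF A pqr gauss_wf_distinct[OF wf(1)] wD wD', symmetric]) auto
    then show ?thesis
      by simp
  qed
  then have "Ind D c = Ind D' c"
    using outside s labels by (intro Ind_cong[OF wf _ c triangle]) auto
  then show ?thesis ..
qed

lemma a_inv_R3_step:
  assumes wf: "gauss_wf D" "gauss_wf D'" and step: "R3_step D D'"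
  shows "a_inv xs D = a_inv xs D'"
proof -
  have "labels D' = labels D \<and> (\<forall>c \<in> labels D. snd D' c = snd D c)"
    by (rule R3_step_normal_form[OF wf step]) (auto simp: labels_def)
  then show ?thesis
    using R3_step_Ind[OF wf step] by (intro a_inv_cong chord_tuples_cong) auto
qed

section \<open>Crossing changes\<close>

definition changed :: "gauss \<Rightarrow> nat set \<Rightarrow> nat set \<Rightarrow> nat set" where
  "changed D S T = {i \<in> S. snd D i \<noteq> (if i \<in> T then -1 else 1)}"

definition change_sign :: "nat set \<Rightarrow> nat \<Rightarrow> int" where
  "change_sign F i = (if i \<in> F then -1 else 1)"

lemma fst_resolve:
  "fst (resolve D S T) = map (\<lambda>(i, b). if i \<in> changed D S T then (i, \<not> b) else (i, b)) (fst D)"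
  unfolding resolve_def changed_def Let_def by simp

lemma snd_resolve: "snd (resolve D S T) c = (if c \<in> S then if c \<in> T then -1 else 1 else snd D c)"
  unfolding resolve_def Let_def by simp

lemma inj_reverse_chords: "inj (\<lambda>(i, b). if i \<in> F then (i, \<not> b) else (i, b))"
  by (auto simp: inj_def split: if_splits)

lemma labels_resolve: "labels (resolve D S T) = labels D"
  unfolding labels_def fst_resolve by force

lemma snd_resolve_eq_change_sign:
  "gauss_wf D \<Longrightarrow> c \<in> labels D \<Longrightarrow> snd (resolve D S T) c = change_sign (changed D S T) c * snd D c"
  using gauss_wf_sign[of D c] unfolding snd_resolve changed_def change_sign_def by auto

lemma gauss_wf_resolve:
  assumes wf: "gauss_wf D"
  shows "gauss_wf (resolve D S T)"
proof -
  have "distinct (fst (resolve D S T))"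
    unfolding fst_resolve using gauss_wf_distinct[OF wf] inj_on_subset[OF inj_reverse_chords subset_UNIV]
    by (simp add: distinct_map)
  moreover have "(i, b) \<in> set (fst (resolve D S T))" if "i \<in> labels D" for i b
    using gauss_wf_endpoint[OF wf that, of "if i \<in> changed D S T then \<not> b else b"]
    unfolding fst_resolve by (force simp: image_iff)
  moreover have "snd (resolve D S T) i = 1 \<or> snd (resolve D S T) i = -1" if "i \<in> labels D" for i
    using gauss_wf_sign[OF wf that] unfolding snd_resolve by auto
  ultimately show ?thesis
    unfolding gauss_wf_def labels_resolve by blast
qed

lemma chord_crossing_resolve:
  fixes S T :: "nat set"
  assumes wf: "gauss_wf D" and cd: "c \<in> labels D" "d \<in> labels D" "c \<noteq> d"
  defines "\<epsilon> \<equiv> change_sign (changed D S T)"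
  shows "chord_crossing (fst (resolve D S T)) c d = \<epsilon> c * \<epsilon> d * chord_crossing (fst D) c d"
proof -
  let ?F = "changed D S T" and ?w = "fst D"
  let ?g = "\<lambda>(i, b). if i \<in> ?F then (i, \<not> b) else (i, b)"
  have pos: "pos (fst (resolve D S T)) (i, b) = pos ?w (i, if i \<in> ?F then \<not> b else b)"
    if "i \<in> labels D" for i b
  proof -
    have "inj_on ?g (set ?w)"
      using inj_reverse_chords by (rule inj_on_subset) simp
    then have "pos (map ?g ?w) (?g (i, if i \<in> ?F then \<not> b else b)) = pos ?w (i, if i \<in> ?F then \<not> b else b)"
      using gauss_wf_endpoint[OF wf that] gauss_wf_distinct[OF wf] by (intro pos_map) auto
    then show ?thesis
      unfolding fst_resolve by (cases "i \<in> ?F") simp_all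
  qed
  let ?ct = "pos ?w (c, True)" and ?ch = "pos ?w (c, False)"
    and ?dt = "pos ?w (d, True)" and ?dh = "pos ?w (d, False)"
  have "distinct [?ct, ?ch, ?dt, ?dh]"
    using cd gauss_wf_endpoint[OF wf] by (auto simp: pos_eq_pos_iff gauss_wf_distinct[OF wf])
  then have "arrow_crossing ?ch ?ct ?dt ?dh = - arrow_crossing ?ct ?ch ?dt ?dh"
    "arrow_crossing ?ct ?ch ?dh ?dt = - arrow_crossing ?ct ?ch ?dt ?dh"
    "arrow_crossing ?ch ?ct ?dh ?dt = arrow_crossing ?ct ?ch ?dt ?dh"
    using arrow_crossing_reverse[of ?ct ?ch ?dt ?dh] arrow_crossing_reverse[of ?ct ?ch ?dh ?dt]
      arrow_crossing_reverse_crossing[of ?ct ?ch ?dt ?dh] by auto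
  then show ?thesis
    unfolding chord_crossing_def \<epsilon>_def change_sign_def pos[OF cd(1)] pos[OF cd(2)]
    by (cases "c \<in> ?F"; cases "d \<in> ?F") simp_all
qed

text \<open>Both factors change sign exactly when \<open>c\<close> is changed.\<close>

lemma signed_Ind_resolve:
  assumes wf: "gauss_wf D" and c: "c \<in> labels D"
  shows "snd (resolve D S T) c * Ind (resolve D S T) c = snd D c * Ind D c"
proof -
  let ?R = "resolve D S T" and ?\<epsilon> = "change_sign (changed D S T)"
  have square: "?\<epsilon> d * ?\<epsilon> d = 1" for d
    unfolding change_sign_def by simp
  have "Ind ?R c = (\<Sum>d \<in> labels D - {c}. ?\<epsilon> c * (?\<epsilon> d * ?\<epsilon> d) * (chord_crossing (fst D) c d * snd D d))"
    using Ind_eq_sum_chord_crossing[OF gauss_wf_resolve[OF wf], of c S T] c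
    by (simp add: labels_resolve chord_crossing_resolve[OF wf c] snd_resolve_eq_change_sign[OF wf] ac_simps)
  also have "\<dots> = ?\<epsilon> c * Ind D c"
    unfolding square Ind_eq_sum_chord_crossing[OF wf c] by (simp add: sum_distrib_left)
  finally show ?thesis
    using snd_resolve_eq_change_sign[OF wf c] square[of c] by simp
qed

section \<open>The alternating sum over resolutions\<close>

lemma sing_deriv_eq_sum_Pow:
  "sing_deriv f D S = (\<Sum>T \<in> Pow S. (-1) ^ card T * f (resolve D S T))" for f :: "gauss \<Rightarrow> int"
  unfolding sing_deriv_def by (intro sum.cong) auto

lemma sum_Pow_alternating_eq_0:
  fixes F :: "'a set \<Rightarrow> 'b :: comm_ring_1"
  assumes S: "finite S" "a \<in> S" and F: "\<And>T. F (insert a T) = F T"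
  shows "(\<Sum>T \<in> Pow S. (-1) ^ card T * F T) = 0"
proof (rule sum_involution_eq_0[where h = "\<lambda>T. if a \<in> T then T - {a} else insert a T"])
  fix T assume "T \<in> Pow S"
  then have T: "finite T"
    using S(1) finite_subset by blast
  show "(-1) ^ card (if a \<in> T then T - {a} else insert a T) * F (if a \<in> T then T - {a} else insert a T) +
      (-1) ^ card T * F T = 0"
  proof (cases "a \<in> T")
    case True
    have card: "card T = Suc (card (T - {a}))"
      using T True by (rule card.remove)
    have "F T = F (T - {a})"
      using F[of "T - {a}"] True by (simp add: insert_absorb)
    then show ?thesis
      unfolding card using True by simp
  next
    case False
    then show ?thesis
      using T F[of T] by simp
  qed
qed (use S in auto)

text \<open>\<open>slot_weight x k e\<close> is the weight of a chord with \<open>w(c) Ind(c) = k\<close>, resolved with sign \<open>e\<close>,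
  in a slot of prescribed index \<open>x\<close>.\<close>

definition slot_weight :: "int \<Rightarrow> int \<Rightarrow> int \<Rightarrow> int" where
  "slot_weight x k e = (if e * k = x then e else 0)"

definition tuples :: "'a set \<Rightarrow> nat \<Rightarrow> 'a list set" where
  "tuples A n = {cs. set cs \<subseteq> A \<and> length cs = n}"

lemma finite_tuples: "finite A \<Longrightarrow> finite (tuples A n)"
  unfolding tuples_def by (rule finite_lists_length_eq)

lemma a_inv_resolve:
  assumes wf: "gauss_wf D"
  shows "a_inv xs (resolve D S T) = (\<Sum>cs \<in> tuples (labels D) (length xs).
    \<Prod>m < length xs. slot_weight (xs ! m) (snd D (cs ! m) * Ind D (cs ! m)) (snd (resolve D S T) (cs ! m)))"
proof -
  let ?R = "resolve D S T"
  let ?W = "\<lambda>cs m. slot_weight (xs ! m) (snd D (cs ! m) * Ind D (cs ! m)) (snd ?R (cs ! m))"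
  have weight: "?W cs m = (if Ind ?R (cs ! m) = xs ! m then snd ?R (cs ! m) else 0)"
    if "cs ! m \<in> labels D" for cs m
  proof -
    have "snd ?R (cs ! m) * snd ?R (cs ! m) = 1"
      using gauss_wf_sign_square[OF gauss_wf_resolve[OF wf]] that by (simp add: labels_resolve)
    then have "snd ?R (cs ! m) * (snd D (cs ! m) * Ind D (cs ! m)) = Ind ?R (cs ! m)"
      using signed_Ind_resolve[OF wf that, of S T] by (metis mult.assoc mult_1)
    then show ?thesis
      unfolding slot_weight_def by simp
  qed
  have subset: "chord_tuples xs ?R \<subseteq> tuples (labels D) (length xs)"
  proof
    fix cs assume "cs \<in> chord_tuples xs ?R"
    then show "cs \<in> tuples (labels D) (length xs)"
      using chord_tuples_subset[of cs xs ?R] unfolding tuples_def labels_resolve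
      by (simp add: chord_tuples_def)
  qed
  show ?thesis
    unfolding a_inv_def
  proof (rule sum.mono_neutral_cong_left[OF finite_tuples[OF finite_labels] subset])
    show "\<forall>cs \<in> tuples (labels D) (length xs) - chord_tuples xs ?R. (\<Prod>m < length xs. ?W cs m) = 0"
    proof
      fix cs assume cs: "cs \<in> tuples (labels D) (length xs) - chord_tuples xs ?R"
      then have labels: "\<And>m. m < length xs \<Longrightarrow> cs ! m \<in> labels D"
        unfolding tuples_def by (auto simp: subset_iff)
      then obtain m where "m < length xs" "Ind ?R (cs ! m) \<noteq> xs ! m"
        using cs unfolding tuples_def chord_tuples_def labels_resolve by auto
      then show "(\<Prod>m < length xs. ?W cs m) = 0"
        using weight[OF labels] by (intro prod_zero) auto
    qed
    show "(\<Prod>m < length xs. snd ?R (cs ! m)) = (\<Prod>m < length xs. ?W cs m)" if "cs \<in> chord_tuples xs ?R" for cs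
      using that weight unfolding chord_tuples_def labels_resolve by (intro prod.cong) auto
  qed
qed

definition tuple_deriv :: "int list \<Rightarrow> gauss \<Rightarrow> nat set \<Rightarrow> nat list \<Rightarrow> int" where
  "tuple_deriv xs D S cs = (\<Sum>T \<in> Pow S. (-1) ^ card T *
     (\<Prod>m < length xs. slot_weight (xs ! m) (snd D (cs ! m) * Ind D (cs ! m)) (snd (resolve D S T) (cs ! m))))"

lemma sing_deriv_a_inv:
  assumes "gauss_wf D"
  shows "sing_deriv (a_inv xs) D S = (\<Sum>cs \<in> tuples (labels D) (length xs). tuple_deriv xs D S cs)"
  unfolding sing_deriv_eq_sum_Pow a_inv_resolve[OF assms] tuple_deriv_def sum_distrib_left
  by (rule sum.swap)

lemma tuple_deriv_eq_0:
  assumes "finite S" "c \<in> S" "c \<notin> set cs" "length cs = length xs"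
  shows "tuple_deriv xs D S cs = 0"
  unfolding tuple_deriv_def
proof (rule sum_Pow_alternating_eq_0[OF assms(1,2)])
  have "cs ! m \<noteq> c" if "m < length xs" for m
    using assms(3,4) that nth_mem by metis
  then show "(\<Prod>m < length xs. slot_weight (xs ! m) (snd D (cs ! m) * Ind D (cs ! m)) (snd (resolve D S (insert c T)) (cs ! m))) =
      (\<Prod>m < length xs. slot_weight (xs ! m) (snd D (cs ! m) * Ind D (cs ! m)) (snd (resolve D S T) (cs ! m)))" for T
    by (intro prod.cong) (auto simp: snd_resolve)
qed

lemma tuple_deriv_distinct:
  assumes cs: "distinct cs" "set cs = S" "length cs = length xs"
  shows "tuple_deriv xs D S cs = (\<Prod>m < length xs.
    slot_weight (xs ! m) (snd D (cs ! m) * Ind D (cs ! m)) 1 - slot_weight (xs ! m) (snd D (cs ! m) * Ind D (cs ! m)) (-1))"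
proof -
  let ?n = "length xs"
  have bij: "bij_betw ((!) cs) {..<?n} S"
    using bij_betw_nth[OF cs(1)] cs by simp
  define idx where "idx = the_inv_into {..<?n} ((!) cs)"
  have idx: "idx (cs ! m) = m" if "m < ?n" for m
    unfolding idx_def using the_inv_into_f_f[OF bij_betw_imp_inj_on[OF bij]] that by simp
  define \<phi> where "\<phi> c e = slot_weight (xs ! idx c) (snd D c * Ind D c) e" for c e
  have product: "(\<Prod>m < ?n. slot_weight (xs ! m) (snd D (cs ! m) * Ind D (cs ! m)) (snd (resolve D S T) (cs ! m))) =
      (\<Prod>c \<in> T. \<phi> c (-1)) * (\<Prod>c \<in> S - T. \<phi> c 1)" if "T \<subseteq> S" for T
  proof -
    have "cs ! m \<in> S" if "m < ?n" for m
      using cs that nth_mem by metis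
    then have "(\<Prod>m < ?n. slot_weight (xs ! m) (snd D (cs ! m) * Ind D (cs ! m)) (snd (resolve D S T) (cs ! m))) =
        (\<Prod>m < ?n. \<phi> (cs ! m) (if cs ! m \<in> T then -1 else 1))"
      by (intro prod.cong refl) (simp add: \<phi>_def idx snd_resolve)
    also have "\<dots> = (\<Prod>c \<in> S. \<phi> c (if c \<in> T then -1 else 1))"
      by (rule prod.reindex_bij_betw[OF bij])
    also have "\<dots> = (\<Prod>c \<in> S - T. \<phi> c (if c \<in> T then -1 else 1)) * (\<Prod>c \<in> T. \<phi> c (if c \<in> T then -1 else 1))"
      using that cs(2) by (intro prod.subset_diff) auto
    also have "\<dots> = (\<Prod>c \<in> T. \<phi> c (-1)) * (\<Prod>c \<in> S - T. \<phi> c 1)"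
      by (simp add: mult.commute)
    finally show ?thesis .
  qed
  have "tuple_deriv xs D S cs = (\<Sum>T \<in> Pow S. (-1) ^ card T * (\<Prod>c \<in> T. \<phi> c (-1)) * (\<Prod>c \<in> S - T. \<phi> c 1))"
    unfolding tuple_deriv_def using product by (intro sum.cong) (auto simp: mult.assoc)
  also have "\<dots> = (\<Prod>c \<in> S. \<phi> c 1 - \<phi> c (-1))"
    using cs(2) prod_diff_conv_sum[symmetric] by blast
  also have "\<dots> = (\<Prod>m < ?n. \<phi> (cs ! m) 1 - \<phi> (cs ! m) (-1))"
    by (rule prod.reindex_bij_betw[OF bij, symmetric])
  finally show ?thesis
    unfolding \<phi>_def using idx by simp
qed

lemma slot_weight_diff_nonneg: "0 \<le> slot_weight x k 1 - slot_weight x k (-1)"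
  unfolding slot_weight_def by simp

lemma slot_weight_diff_pos: "1 \<le> slot_weight k k 1 - slot_weight k k (-1)"
  unfolding slot_weight_def by simp

lemma sing_deriv_a_inv_eq_0:
  assumes wf: "gauss_wf D" and S: "S \<subseteq> labels D" "card S = length xs + 1"
  shows "sing_deriv (a_inv xs) D S = 0"
proof -
  have "tuple_deriv xs D S cs = 0" if "cs \<in> tuples (labels D) (length xs)" for cs
  proof -
    have length: "length cs = length xs"
      using that by (simp add: tuples_def)
    then have "\<not> S \<subseteq> set cs"
      using S(2) card_length[of cs] card_mono[of "set cs" S] by auto
    then obtain c where "c \<in> S" "c \<notin> set cs"
      by blast
    then show ?thesis
      using tuple_deriv_eq_0 finite_subset[OF S(1) finite_labels] length by blast
  qed
  then show ?thesis
    unfolding sing_deriv_a_inv[OF wf] by simp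
qed

lemma sing_deriv_a_inv_pos:
  assumes wf: "gauss_wf D" and cs: "distinct cs" "set cs \<subseteq> labels D" "length cs = length xs"
    and signed_Ind: "\<And>m. m < length xs \<Longrightarrow> snd D (cs ! m) * Ind D (cs ! m) = xs ! m"
  shows "sing_deriv (a_inv xs) D (set cs) > 0"
proof -
  let ?S = "set cs"
  have nonneg: "tuple_deriv xs D ?S cs' \<ge> 0" if "cs' \<in> tuples (labels D) (length xs)" for cs'
  proof (cases "?S \<subseteq> set cs'")
    case True
    have length: "length cs' = length xs"
      using that by (simp add: tuples_def)
    have "card ?S = length xs"
      using cs by (simp add: distinct_card)
    moreover have "card (set cs') \<le> length xs"
      using card_length length by metis
    moreover have "card ?S \<le> card (set cs')"
      using True by (simp add: card_mono)
    ultimately have "card (set cs') = length cs'" "?S = set cs'"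
      using True length by (simp_all add: card_subset_eq)
    then have "distinct cs'" "set cs' = ?S"
      by (simp_all add: card_distinct)
    then show ?thesis
      using length by (simp add: tuple_deriv_distinct slot_weight_diff_nonneg prod_nonneg del: diff_ge_0_iff_ge)
  next
    case False
    then obtain c where "c \<in> ?S" "c \<notin> set cs'"
      by blast
    then show ?thesis
      using that tuple_deriv_eq_0[of ?S c cs' xs D] by (simp add: tuples_def)
  qed
  have "tuple_deriv xs D ?S cs \<ge> 1"
    using cs signed_Ind by (simp add: tuple_deriv_distinct slot_weight_diff_pos prod_ge_1)
  moreover have "tuple_deriv xs D ?S cs \<le> (\<Sum>cs' \<in> tuples (labels D) (length xs). tuple_deriv xs D ?S cs')"
    using cs nonneg finite_tuples[OF finite_labels] by (intro member_le_sum) (auto simp: tuples_def)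
  ultimately show ?thesis
    unfolding sing_deriv_a_inv[OF wf] by simp
qed

section \<open>Diagrams with prescribed signed indices\<close>

text \<open>Chord \<open>N\<close> followed by \<open>k\<close> parallel chords \<open>N + 1, \<dots>, N + k\<close>, each crossing \<open>N\<close> from right
  to left.\<close>

definition block :: "nat \<Rightarrow> nat \<Rightarrow> (nat \<times> bool) list" where
  "block N k = (N, True) # map (\<lambda>i. (i, True)) [Suc N..<Suc (N + k)] @
     (N, False) # map (\<lambda>i. (i, False)) [Suc N..<Suc (N + k)]"

lemma set_block: "set (block N k) = {N..N + k} \<times> UNIV"
proof -
  have "{N..N + k} = insert N {Suc N..<Suc (N + k)}"
    by auto
  then show ?thesis
    unfolding block_def by (auto simp del: upt_Suc)
qed

lemma distinct_block: "distinct (block N k)"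
  unfolding block_def by (auto simp: distinct_map inj_on_def)

lemma chord_crossing_separated_words:
  assumes "distinct (u @ w)" "{c} \<times> UNIV \<subseteq> set u" "{d} \<times> UNIV \<subseteq> set w"
  shows "chord_crossing (u @ w) c d = 0" "chord_crossing (u @ w) d c = 0"
proof -
  have "(c, b) \<in> set u" "(d, b) \<in> set w" for b
    using assms(2,3) by auto
  then have c: "pos (u @ w) (c, b) < length u" and d: "length u \<le> pos (u @ w) (d, b)" for b
    using assms(1) by (simp_all add: pos_append_left pos_append_right pos_less_length)
  show "chord_crossing (u @ w) c d = 0"
    unfolding chord_crossing_def by (rule arrow_crossing_separated, rule disjI2) (meson c d less_le_trans)
  show "chord_crossing (u @ w) d c = 0"
    unfolding chord_crossing_def by (rule arrow_crossing_separated, rule disjI1) (meson c d less_le_trans)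
qed

lemma chord_crossing_block:
  assumes "distinct (block N k @ w)" "d \<in> {N<..N + k}"
  shows "chord_crossing (block N k @ w) N d = -1"
proof -
  define j where "j = d - Suc N"
  have j: "d = Suc N + j" "j < k"
    using assms(2) unfolding j_def by auto
  have length: "length (block N k) = Suc (Suc (k + k))"
    unfolding block_def by (simp del: upt_Suc)
  have nth: "block N k ! 0 = (N, True)" "block N k ! Suc k = (N, False)"
    "block N k ! Suc j = (d, True)" "block N k ! Suc (Suc (k + j)) = (d, False)"
    using j unfolding block_def by (simp_all add: nth_append del: upt_Suc)
  have "pos (block N k @ w) (block N k ! i) = i" if "i < length (block N k)" for i
    using assms(1) that by (simp add: pos_append_left pos_nth)
  then have "pos (block N k @ w) (N, True) = 0" "pos (block N k @ w) (N, False) = Suc k"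
    "pos (block N k @ w) (d, True) = Suc j" "pos (block N k @ w) (d, False) = Suc (Suc (k + j))"
    using j(2) unfolding length nth[symmetric] by simp_all
  then show ?thesis
    unfolding chord_crossing_def arrow_crossing_def cyclic_order_def using j(2) by simp
qed

definition add_block :: "gauss \<Rightarrow> nat \<Rightarrow> nat \<Rightarrow> int \<Rightarrow> gauss" where
  "add_block D N k \<sigma> = (block N k @ fst D, \<lambda>i. if i = N then 1 else if i \<in> {N<..N + k} then \<sigma> else snd D i)"

context
  fixes D :: gauss and N :: nat
  assumes wf: "gauss_wf D" and below: "\<forall>i \<in> labels D. i < N"
begin

lemma labels_add_block: "labels (add_block D N k \<sigma>) = {N..N + k} \<union> labels D"
  unfolding labels_def add_block_def by (force simp: set_block)

lemma distinct_add_block: "distinct (fst (add_block D N k \<sigma>))"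
proof -
  have "set (block N k) \<inter> set (fst D) = {}"
    using below unfolding set_block labels_def by force
  then show ?thesis
    unfolding add_block_def using distinct_block gauss_wf_distinct[OF wf] by simp
qed

lemma gauss_wf_add_block:
  assumes "\<sigma> \<in> {1, -1}"
  shows "gauss_wf (add_block D N k \<sigma>)"
proof -
  have "(i, b) \<in> set (fst (add_block D N k \<sigma>))" if "i \<in> {N..N + k} \<union> labels D" for i b
    using that gauss_wf_endpoint[OF wf] by (auto simp: add_block_def set_block)
  moreover have "snd (add_block D N k \<sigma>) i \<in> {1, -1}" if "i \<in> {N..N + k} \<union> labels D" for i
    using that assms gauss_wf_sign[OF wf] below by (auto simp: add_block_def)
  ultimately show ?thesis
    unfolding gauss_wf_def labels_add_block using distinct_add_block by blast
qed

lemma snd_add_block: "c \<in> labels D \<Longrightarrow> snd (add_block D N k \<sigma>) c = snd D c"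
  using below by (auto simp: add_block_def)

lemma Ind_add_block_old:
  assumes "\<sigma> \<in> {1, -1}" and c: "c \<in> labels D"
  shows "Ind (add_block D N k \<sigma>) c = Ind D c"
proof -
  let ?D' = "add_block D N k \<sigma>"
  have filter: "fst D = filter (\<lambda>e. fst e \<notin> {N..N + k}) (fst ?D')"
    using below unfolding add_block_def labels_def
    by (auto simp: set_block filter_empty_conv intro!: filter_True[symmetric])
  have crossing: "chord_crossing (fst ?D') c d = 0" if "d \<in> {N..N + k}" for d
    using that c distinct_add_block gauss_wf_endpoint[OF wf c] unfolding add_block_def fst_conv
    by (intro chord_crossing_separated_words(2)) (auto simp: set_block)
  have "Ind ?D' c = Ind D c + (\<Sum>d \<in> labels ?D' \<inter> {N..N + k}. chord_crossing (fst ?D') c d * snd ?D' d)"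
    using snd_add_block by (intro Ind_delete_chords[OF wf gauss_wf_add_block[OF assms(1)] filter _ c]) auto
  also have "\<dots> = Ind D c"
    using crossing by simp
  finally show ?thesis .
qed

lemma Ind_add_block_new:
  assumes "\<sigma> \<in> {1, -1}"
  shows "Ind (add_block D N k \<sigma>) N = - (int k * \<sigma>)"
proof -
  let ?D' = "add_block D N k \<sigma>"
  have "N \<in> labels ?D'" "labels ?D' - {N} = {N<..N + k} \<union> labels D"
    using below unfolding labels_add_block by auto
  moreover have "chord_crossing (fst ?D') N d = 0" if "d \<in> labels D" for d
    using that below distinct_add_block gauss_wf_endpoint[OF wf that] unfolding add_block_def fst_conv
    by (intro chord_crossing_separated_words(1)) (auto simp: set_block)
  moreover have "chord_crossing (fst ?D') N d = -1" if "d \<in> {N<..N + k}" for d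
    using chord_crossing_block distinct_add_block that unfolding add_block_def by simp
  moreover have "{N<..N + k} \<inter> labels D = {}"
    using below by force
  ultimately show ?thesis
    using Ind_eq_sum_chord_crossing[OF gauss_wf_add_block[OF assms], of N] finite_labels[of D]
    by (simp add: sum.union_disjoint add_block_def)
qed

end

lemma exists_extension_with_signed_Ind:
  assumes wf: "gauss_wf D" and below: "\<forall>i \<in> labels D. i < N"
  shows "\<exists>D'. gauss_wf D' \<and> N \<in> labels D' \<and> labels D \<subseteq> labels D' \<and> snd D' N * Ind D' N = y \<and>
    (\<forall>c \<in> labels D. snd D' c = snd D c \<and> Ind D' c = Ind D c)"
proof -
  define \<sigma> :: int where "\<sigma> = (if 0 < y then -1 else 1)"
  have \<sigma>: "\<sigma> \<in> {1, -1}" and y: "- (int (nat \<bar>y\<bar>) * \<sigma>) = y"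
    unfolding \<sigma>_def by auto
  have "snd (add_block D N (nat \<bar>y\<bar>) \<sigma>) N = 1"
    by (simp add: add_block_def)
  then show ?thesis
    using \<sigma> y labels_add_block[OF wf below] gauss_wf_add_block[OF wf below \<sigma>] snd_add_block[OF wf below]
      Ind_add_block_old[OF wf below \<sigma>] Ind_add_block_new[OF wf below \<sigma>]
    by (intro exI[of _ "add_block D N (nat \<bar>y\<bar>) \<sigma>"]) auto
qed

lemma exists_diagram_with_signed_indices:
  "\<exists>D cs. gauss_wf D \<and> distinct cs \<and> set cs \<subseteq> labels D \<and> length cs = length ys \<and>
    (\<forall>m < length ys. snd D (cs ! m) * Ind D (cs ! m) = ys ! m)"
proof (induction ys)
  case Nil
  have "gauss_wf ([], \<lambda>_. 1)"
    unfolding gauss_wf_def labels_def by simp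
  then show ?case
    by (intro exI[of _ "([], \<lambda>_. 1)"] exI[of _ "[]"]) simp
next
  case (Cons y ys)
  then obtain D cs where wf: "gauss_wf D" and cs: "distinct cs" "set cs \<subseteq> labels D" "length cs = length ys"
    and signed_Ind: "\<forall>m < length ys. snd D (cs ! m) * Ind D (cs ! m) = ys ! m"
    by blast
  define N where "N = Suc (Max (insert 0 (labels D)))"
  have below: "\<forall>i \<in> labels D. i < N"
    unfolding N_def using finite_labels[of D] by (simp add: le_imp_less_Suc)
  obtain D' where D': "gauss_wf D'" "N \<in> labels D'" "labels D \<subseteq> labels D'" "snd D' N * Ind D' N = y"
    and old: "\<forall>c \<in> labels D. snd D' c = snd D c \<and> Ind D' c = Ind D c"
    using exists_extension_with_signed_Ind[OF wf below, of y] by blast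
  have tail: "snd D' (cs ! m) * Ind D' (cs ! m) = ys ! m" if "m < length ys" for m
  proof -
    have "cs ! m \<in> set cs"
      using that cs(3) by simp
    then have "cs ! m \<in> labels D"
      using cs(2) by blast
    then show ?thesis
      using old signed_Ind that by simp
  qed
  have "N \<notin> set cs"
    using cs(2) below by auto
  then have "gauss_wf D' \<and> distinct (N # cs) \<and> set (N # cs) \<subseteq> labels D' \<and> length (N # cs) = length (y # ys)"
    using D' cs by auto
  moreover have "snd D' ((N # cs) ! m) * Ind D' ((N # cs) ! m) = (y # ys) ! m" if "m < length (y # ys)" for m
    using that D'(4) tail by (cases m) simp_all
  ultimately show ?case
    by blast
qed

theorem theorem3p7:
  fixes xs :: "int list"
  assumes "length xs \<ge> 1"
    and "sorted_wrt (>) xs"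
    and "0 \<notin> set xs"
  shows "knot_invariant (a_inv xs) \<and> finite_type_degree (a_inv xs) (length xs)"
proof
  have distinct: "distinct xs"
    using assms(2) by (induction xs) auto
  show "knot_invariant (a_inv xs)"
    unfolding knot_invariant_def gstep_def
    using a_inv_rot_step a_inv_relabel_step a_inv_R1_step[OF _ _ _ assms(3)]
      a_inv_R2_step[OF _ _ _ distinct] a_inv_R3_step
    by blast
  obtain D cs where D: "gauss_wf D" and cs: "distinct cs" "set cs \<subseteq> labels D" "length cs = length xs"
    and signed_Ind: "\<forall>m < length xs. snd D (cs ! m) * Ind D (cs ! m) = xs ! m"
    using exists_diagram_with_signed_indices[of xs] by blast
  then have "sing_deriv (a_inv xs) D (set cs) \<noteq> 0" "card (set cs) = length xs"
    using sing_deriv_a_inv_pos[OF D cs] by (auto simp: distinct_card)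
  then show "finite_type_degree (a_inv xs) (length xs)"
    unfolding finite_type_degree_def using sing_deriv_a_inv_eq_0 D cs(2) by blast
qed

end
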